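(* Let $\mathcal{N}$ be an Extended TKPN (a Mimos model). Fix, for every input channel of $\mathcal{N}$, an input data stream together with the arrival times of its data items in the corresponding FIFO or register, i.e. a timed input stream. Then the output data streams computed by $\mathcal{N}$ are uniquely determined, and so are the time points at which the data items are inserted into the output FIFOs or registers. That is, $\mathcal{N}$ defines a function from tuples of timed input streams to tuples of timed output streams.
   Context: A Kahn Process Network (KPN) consists of nodes (processes) and FIFO channels of unbounded capacity. Each channel has at most one reader and at most one writer. Each node computes a tuple of functions, one per output, mapping input sequences to a unique output sequence, and a node cannot access the state of other nodes. Reading from a FIFO is blocking: a node waits until all data needed for its next step is available and cannot test a channel for emptiness. Writing is non-blocking. A TKPN (timed KPN) is a KPN in which every node is additionally given a deterministic release pattern (a non-decreasing, divergent sequence of time points in $\mathbb{R}$) and a deadline $\delta\ge 0$. At a release, if all needed inputs are available, the node reads its inputs, computes, and writes its outputs exactly $\delta$ time units after the release; the relevant release is the first one at or after the time when all required data is ready. An Extended TKPN (Mimos) additionally allows: (i) register channels: a write overwrites the stored value; a read is non-blocking and returns the most recently written value; if a read and a write occur at the same time, the write happens first. (ii) merge nodes: a node with at least two input FIFOs and one output FIFO. At each activation it reads all data available in its input FIFOs and outputs all data read from the first input, then all data read from the second, and so on; all output items are stamped with the activation time. A timed stream is a sequence of pairs (data value, time point) whose time components are non-decreasing and divergent. *)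

theory Defs
  imports Complex_Main "HOL-Library.Product_Lexorder"
begin

text \<open>A (finite or infinite) stream of stamped items, represented as a prefix-closed
  partial map from positions to items.\<close>
type_synonym ('v, 't) str = "nat \<Rightarrow> ('v \<times> 't) option"

definition tstream :: "('v, real) str \<Rightarrow> bool" where
  "tstream s \<longleftrightarrow>
     (\<forall>i. s i = None \<longrightarrow> s (Suc i) = None) \<and>
     (\<forall>i j v w t u. i \<le> j \<longrightarrow> s i = Some (v, t) \<longrightarrow> s j = Some (w, u) \<longrightarrow> t \<le> u) \<and>
     ((\<forall>i. s i \<noteq> None) \<longrightarrow> (\<forall>B. \<exists>i t v. s i = Some (v, t) \<and> B < t))"

text \<open>Internally, writes are stamped with superdense time (real time, microstep),
  ordered lexicographically (Product_Lexorder).  Zero-delay writes get the next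
  microstep, which makes the causal order within one time instant explicit.\<close>
type_synonym sdtime = "real \<times> nat"

definition strip :: "('v, sdtime) str \<Rightarrow> ('v, real) str" where
  "strip s = (\<lambda>i. map_option (\<lambda>(v, t, m). (v, t)) (s i))"

definition stamp0 :: "('v, real) str \<Rightarrow> ('v, sdtime) str" where
  "stamp0 s = (\<lambda>i. map_option (\<lambda>(v, t). (v, (t, 0))) (s i))"

text \<open>Concatenation of the (finite) output lists of successive firings, each list stamped
  with the write time of its firing.\<close>
definition cum :: "(nat \<Rightarrow> ('v list \<times> 't) option) \<Rightarrow> nat \<Rightarrow> nat" where
  "cum ev k = (\<Sum>i<k. case ev i of None \<Rightarrow> 0 | Some (xs, _) \<Rightarrow> length xs)"

definition concat_str :: "(nat \<Rightarrow> ('v list \<times> 't) option) \<Rightarrow> ('v, 't) str" where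
  "concat_str ev i =
     (if \<exists>k. i < cum ev (Suc k) then
        (let k = (LEAST k. i < cum ev (Suc k)) in
           case ev k of None \<Rightarrow> None | Some (xs, t) \<Rightarrow> Some (xs ! (i - cum ev k), t))
      else None)"

text \<open>A process node is a deterministic sequential (Kahn) process given as a state machine:
  initial state, the number of tokens it needs from each input FIFO for its next step
  (depending on its state), and the step function which receives the tokens read from the
  input FIFOs and the current values of the input registers (None = never written) and
  returns the next state, the list of values written to each output FIFO and the value
  (if any) written to each output register.
  A merge node is given by the ordered list of its input FIFOs.\<close>
datatype ('c, 's, 'v) nkind =
    Proc 's "'s \<Rightarrow> 'c \<Rightarrow> nat"
         "'s \<Rightarrow> ('c \<Rightarrow> 'v list) \<Rightarrow> ('c \<Rightarrow> 'v option) \<Rightarrow> 's \<times> ('c \<Rightarrow> 'v list) \<times> ('c \<Rightarrow> 'v option)"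
  | Merge "'c list"

record ('n, 'c, 's, 'v) mimos =
  nodes  :: "'n set"
  chans  :: "'c set"
  is_reg :: "'c \<Rightarrow> bool"
  writer :: "'c \<Rightarrow> 'n option"     \<comment> \<open>None: input channel of the network\<close>
  reader :: "'c \<Rightarrow> 'n option"     \<comment> \<open>None: output channel of the network\<close>
  kind   :: "'n \<Rightarrow> ('c, 's, 'v) nkind"
  rel    :: "'n \<Rightarrow> nat \<Rightarrow> real"  \<comment> \<open>release pattern (activation times for merges)\<close>
  dl     :: "'n \<Rightarrow> real"

definition infifos :: "('n, 'c, 's, 'v) mimos \<Rightarrow> 'n \<Rightarrow> 'c set" where
  "infifos N n = {c \<in> chans N. reader N c = Some n \<and> \<not> is_reg N c}"

definition inregs :: "('n, 'c, 's, 'v) mimos \<Rightarrow> 'n \<Rightarrow> 'c set" where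
  "inregs N n = {c \<in> chans N. reader N c = Some n \<and> is_reg N c}"

definition outchans :: "('n, 'c, 's, 'v) mimos \<Rightarrow> 'n \<Rightarrow> 'c set" where
  "outchans N n = {c \<in> chans N. writer N c = Some n}"

definition wf_mimos :: "('n, 'c, 's, 'v) mimos \<Rightarrow> bool" where
  "wf_mimos N \<longleftrightarrow>
     finite (nodes N) \<and> finite (chans N) \<and>
     (\<forall>c \<in> chans N. \<forall>n. writer N c = Some n \<longrightarrow> n \<in> nodes N) \<and>
     (\<forall>c \<in> chans N. \<forall>n. reader N c = Some n \<longrightarrow> n \<in> nodes N) \<and>
     (\<forall>n \<in> nodes N. mono (rel N n) \<and> (\<forall>B. \<exists>k. B < rel N n k) \<and> 0 \<le> dl N n) \<and>
     (\<forall>n \<in> nodes N. \<forall>cs. kind N n = Merge cs \<longrightarrow>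
        2 \<le> length cs \<and> distinct cs \<and> set cs = {c \<in> chans N. reader N c = Some n} \<and>
        (\<forall>c \<in> set cs. \<not> is_reg N c) \<and>
        (\<exists>c. outchans N n = {c} \<and> \<not> is_reg N c))"

text \<open>Histories: for every channel, the stream of all items written to it (for a register:
  the sequence of writes), with superdense write stamps.\<close>
type_synonym ('c, 'v) hist = "'c \<Rightarrow> ('v, sdtime) str"

definition stamp :: "('v, sdtime) str \<Rightarrow> nat \<Rightarrow> sdtime" where
  "stamp s i = snd (the (s i))"

definition val :: "('v, sdtime) str \<Rightarrow> nat \<Rightarrow> 'v" where
  "val s i = fst (the (s i))"

text \<open>Non-blocking register read at time \<open>\<tau>\<close>: most recent write not later than \<open>\<tau>\<close>
  (so a simultaneous write happens first).\<close>
definition reg_val :: "('v, sdtime) str \<Rightarrow> sdtime \<Rightarrow> 'v option" where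
  "reg_val s \<tau> =
     (if \<exists>i. s i \<noteq> None \<and> stamp s i \<le> \<tau>
      then Some (val s (GREATEST i. s i \<noteq> None \<and> stamp s i \<le> \<tau>)) else None)"

text \<open>Configuration of a process node before a firing: state, number of tokens consumed so far
  from each FIFO, index of the first release not yet used, time of the previous firing.\<close>
type_synonym ('c, 's) conf = "'s \<times> ('c \<Rightarrow> nat) \<times> nat \<times> sdtime"

definition p_ready :: "('n, 'c, 's, 'v) mimos \<Rightarrow> 'n \<Rightarrow> ('s \<Rightarrow> 'c \<Rightarrow> nat) \<Rightarrow> ('c, 'v) hist
                       \<Rightarrow> 's \<Rightarrow> ('c \<Rightarrow> nat) \<Rightarrow> bool" where
  "p_ready N n dem H st cns \<longleftrightarrow>
     (\<forall>c \<in> infifos N n. \<forall>i. cns c \<le> i \<and> i < cns c + dem st c \<longrightarrow> H c i \<noteq> None)"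

definition p_stamps :: "('n, 'c, 's, 'v) mimos \<Rightarrow> 'n \<Rightarrow> ('s \<Rightarrow> 'c \<Rightarrow> nat) \<Rightarrow> ('c, 'v) hist
                       \<Rightarrow> 's \<Rightarrow> ('c \<Rightarrow> nat) \<Rightarrow> sdtime set" where
  "p_stamps N n dem H st cns =
     {stamp (H c) i | c i. c \<in> infifos N n \<and> cns c \<le> i \<and> i < cns c + dem st c}"

text \<open>One firing from configuration (st, cns, nj, lt), assuming the needed data is present:
  it happens at the first unused release at or after the time when all needed data is ready.\<close>
definition p_step :: "('n, 'c, 's, 'v) mimos \<Rightarrow> 'n \<Rightarrow> ('s \<Rightarrow> 'c \<Rightarrow> nat)
      \<Rightarrow> ('s \<Rightarrow> ('c \<Rightarrow> 'v list) \<Rightarrow> ('c \<Rightarrow> 'v option) \<Rightarrow> 's \<times> ('c \<Rightarrow> 'v list) \<times> ('c \<Rightarrow> 'v option))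
      \<Rightarrow> ('c, 'v) hist \<Rightarrow> ('c, 's) conf
      \<Rightarrow> ('c, 's) conf \<times> (sdtime \<times> ('c \<Rightarrow> 'v list) \<times> ('c \<Rightarrow> 'v option))" where
  "p_step N n dem stp H cf =
     (case cf of (st, cns, nj, lt) \<Rightarrow>
       let S = p_stamps N n dem H st cns;
           j = (LEAST j. nj \<le> j \<and> (\<forall>x \<in> S. fst x \<le> rel N n j));
           \<tau> = Max ({(rel N n j, 0), lt} \<union> S);
           fr = (\<lambda>c. if c \<in> infifos N n then map (val (H c)) [cns c..<cns c + dem st c] else []);
           rr = (\<lambda>c. if c \<in> inregs N n then reg_val (H c) \<tau> else None);
           (st', fo, ro) = stp st fr rr;
           w = (if 0 < dl N n then (rel N n j + dl N n, 0) else (fst \<tau>, Suc (snd \<tau>)))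
       in ((st', (\<lambda>c. cns c + (if c \<in> infifos N n then dem st c else 0)), Suc j, \<tau>), (w, fo, ro)))"

primrec p_conf :: "('n, 'c, 's, 'v) mimos \<Rightarrow> 'n \<Rightarrow> 's \<Rightarrow> ('s \<Rightarrow> 'c \<Rightarrow> nat)
      \<Rightarrow> ('s \<Rightarrow> ('c \<Rightarrow> 'v list) \<Rightarrow> ('c \<Rightarrow> 'v option) \<Rightarrow> 's \<times> ('c \<Rightarrow> 'v list) \<times> ('c \<Rightarrow> 'v option))
      \<Rightarrow> ('c, 'v) hist \<Rightarrow> nat \<Rightarrow> ('c, 's) conf option" where
  "p_conf N n i0 dem stp H 0 = Some (i0, (\<lambda>_. 0), 0, (rel N n 0, 0))"
| "p_conf N n i0 dem stp H (Suc k) =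
     (case p_conf N n i0 dem stp H k of
        None \<Rightarrow> None
      | Some cf \<Rightarrow> (case cf of (st, cns, _) \<Rightarrow>
          if p_ready N n dem H st cns then Some (fst (p_step N n dem stp H cf)) else None))"

definition p_event :: "('n, 'c, 's, 'v) mimos \<Rightarrow> 'n \<Rightarrow> 's \<Rightarrow> ('s \<Rightarrow> 'c \<Rightarrow> nat)
      \<Rightarrow> ('s \<Rightarrow> ('c \<Rightarrow> 'v list) \<Rightarrow> ('c \<Rightarrow> 'v option) \<Rightarrow> 's \<times> ('c \<Rightarrow> 'v list) \<times> ('c \<Rightarrow> 'v option))
      \<Rightarrow> ('c, 'v) hist \<Rightarrow> nat \<Rightarrow> (sdtime \<times> ('c \<Rightarrow> 'v list) \<times> ('c \<Rightarrow> 'v option)) option" where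
  "p_event N n i0 dem stp H k =
     (case p_conf N n i0 dem stp H k of
        None \<Rightarrow> None
      | Some cf \<Rightarrow> (case cf of (st, cns, _) \<Rightarrow>
          if p_ready N n dem H st cns then Some (snd (p_step N n dem stp H cf)) else None))"

text \<open>Merge node: the k-th activation happens at release k; it reads all items of each input
  FIFO present at that time and not read before, and outputs them (first input first),
  stamped with the activation time.\<close>
definition cnt :: "('v, sdtime) str \<Rightarrow> sdtime \<Rightarrow> nat" where
  "cnt s \<tau> = card {i. s i \<noteq> None \<and> stamp s i \<le> \<tau>}"

definition merge_event :: "('n, 'c, 's, 'v) mimos \<Rightarrow> 'n \<Rightarrow> 'c list \<Rightarrow> ('c, 'v) hist
      \<Rightarrow> nat \<Rightarrow> ('v list \<times> sdtime) option" where
  "merge_event N n cs H k =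
     Some (concat (map (\<lambda>c. map (val (H c))
             [(if k = 0 then 0 else cnt (H c) (rel N n (k - 1), 0))..<cnt (H c) (rel N n k, 0)]) cs),
           (rel N n k, 1))"

definition node_out :: "('n, 'c, 's, 'v) mimos \<Rightarrow> 'n \<Rightarrow> ('c, 'v) hist \<Rightarrow> 'c \<Rightarrow> ('v, sdtime) str" where
  "node_out N n H c =
     (case kind N n of
        Proc i0 dem stp \<Rightarrow>
          concat_str (\<lambda>k. case p_event N n i0 dem stp H k of
                              None \<Rightarrow> None
                            | Some (w, fo, ro) \<Rightarrow>
                                Some (if is_reg N c then (case ro c of None \<Rightarrow> [] | Some v \<Rightarrow> [v])
                                      else fo c, w))
      | Merge cs \<Rightarrow> concat_str (merge_event N n cs H))"

definition is_run :: "('n, 'c, 's, 'v) mimos \<Rightarrow> ('c \<Rightarrow> ('v, real) str) \<Rightarrow> ('c, 'v) hist \<Rightarrow> bool" where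
  "is_run N inp H \<longleftrightarrow>
     (\<forall>c \<in> chans N. H c = (case writer N c of None \<Rightarrow> stamp0 (inp c) | Some n \<Rightarrow> node_out N n H c))"

definition in_chans :: "('n, 'c, 's, 'v) mimos \<Rightarrow> 'c set" where
  "in_chans N = {c \<in> chans N. writer N c = None}"

definition out_chans :: "('n, 'c, 's, 'v) mimos \<Rightarrow> 'c set" where
  "out_chans N = {c \<in> chans N. reader N c = None}"

end

theory Submission
  imports Defs "HOL-Library.Infinite_Set"
begin

text \<open>Every write is stamped with superdense time (real time, microstep). Each node is causal:
  its writes stamped at most \<open>\<sigma>\<close> depend only on items stamped strictly before \<open>\<sigma>\<close>, since a
  write comes strictly after the reads it depends on (a zero-delay write takes the next
  microstep, a merge writes at microstep 1 what it counted at microstep 0). All stamps have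
  their real part among the release times, the release times plus deadlines and the input
  arrival times; only finitely many of these lie below any bound, so the strict order on such
  stamps is well-founded. By well-founded induction, histories that are runs up to \<open>\<sigma>\<close> are
  unique up to \<open>\<sigma>\<close>, and they exist by gluing runs up to smaller stamps and applying the
  network once more; gluing runs up to all relevant stamps yields a run. Output streams are
  timed because the \<open>k\<close>-th firing of a node is not earlier than its \<open>k\<close>-th release.\<close>

definition ordered_str :: "('v, 't::order) str \<Rightarrow> bool" where
  "ordered_str s \<longleftrightarrow> (\<forall>i j. i \<le> j \<longrightarrow> s j \<noteq> None \<longrightarrow> s i \<noteq> None) \<and>
     (\<forall>i j v w t u. i \<le> j \<longrightarrow> s i = Some (v, t) \<longrightarrow> s j = Some (w, u) \<longrightarrow> t \<le> u)"

definition agree_upto :: "'t::order \<Rightarrow> ('v, 't) str \<Rightarrow> ('v, 't) str \<Rightarrow> bool" where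
  "agree_upto \<sigma> s s' \<longleftrightarrow> (\<forall>i v t. t \<le> \<sigma> \<longrightarrow> (s i = Some (v, t) \<longleftrightarrow> s' i = Some (v, t)))"

definition agree_before :: "'t::order \<Rightarrow> ('v, 't) str \<Rightarrow> ('v, 't) str \<Rightarrow> bool" where
  "agree_before \<sigma> s s' \<longleftrightarrow> (\<forall>i v t. t < \<sigma> \<longrightarrow> (s i = Some (v, t) \<longleftrightarrow> s' i = Some (v, t)))"

lemma ordered_str_down:
  assumes "ordered_str s" "s j = Some (w, u)" "i \<le> j"
  shows "\<exists>v t. s i = Some (v, t) \<and> t \<le> u"
proof -
  have "s i \<noteq> None" using assms unfolding ordered_str_def by blast
  then obtain v t where st: "s i = Some (v, t)" by fastforce
  then have "t \<le> u" using assms unfolding ordered_str_def by blast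
  then show ?thesis using st by blast
qed

lemma agree_uptoD: "agree_upto \<sigma> s s' \<Longrightarrow> t \<le> \<sigma> \<Longrightarrow> s i = Some (v, t) \<Longrightarrow> s' i = Some (v, t)"
  unfolding agree_upto_def by blast

lemma agree_uptoD': "agree_upto \<sigma> s s' \<Longrightarrow> t \<le> \<sigma> \<Longrightarrow> s' i = Some (v, t) \<Longrightarrow> s i = Some (v, t)"
  unfolding agree_upto_def by blast

lemma agree_upto_mono: "agree_upto \<sigma> s s' \<Longrightarrow> \<rho> \<le> \<sigma> \<Longrightarrow> agree_upto \<rho> s s'"
  unfolding agree_upto_def by (meson order_trans)

lemma agree_upto_trans: "agree_upto \<sigma> s s' \<Longrightarrow> agree_upto \<sigma> s' s'' \<Longrightarrow> agree_upto \<sigma> s s''"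
  unfolding agree_upto_def by blast

lemma agree_upto_sym: "agree_upto \<sigma> s s' \<Longrightarrow> agree_upto \<sigma> s' s"
  unfolding agree_upto_def by blast

lemma agree_upto_before: "agree_upto \<sigma> s s' \<Longrightarrow> agree_before \<sigma> s s'"
  unfolding agree_upto_def agree_before_def by (meson less_imp_le)

lemma agree_before_sym: "agree_before \<sigma> s s' \<Longrightarrow> agree_before \<sigma> s' s"
  unfolding agree_before_def by blast

lemma agree_before_from:
  assumes "\<And>i v t. s i = Some (v, t) \<Longrightarrow> P t" "\<And>i v t. s' i = Some (v, t) \<Longrightarrow> P t"
    and "\<And>\<rho>. P \<rho> \<Longrightarrow> \<rho> < \<sigma> \<Longrightarrow> agree_upto \<rho> s s'"
  shows "agree_before \<sigma> s s'"
  unfolding agree_before_def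
proof (intro allI impI iffI)
  fix i v t assume t: "t < \<sigma>"
  { assume h: "s i = Some (v, t)"
    then show "s' i = Some (v, t)" using agree_uptoD[OF assms(3)[OF assms(1)[OF h] t] order_refl] by blast }
  { assume h: "s' i = Some (v, t)"
    then show "s i = Some (v, t)" using agree_uptoD'[OF assms(3)[OF assms(2)[OF h] t] order_refl] by blast }
qed

lemma eq_from_agree:
  assumes "\<And>i v t. s i = Some (v, t) \<Longrightarrow> P t" "\<And>i v t. s' i = Some (v, t) \<Longrightarrow> P t"
    and "\<And>\<rho>. P \<rho> \<Longrightarrow> agree_upto \<rho> s s'"
  shows "s = s'"
proof
  fix i show "s i = s' i"
  proof (cases "s i")
    case None
    then show ?thesis using assms(2,3) agree_uptoD' by (cases "s' i") fastforce+
  next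
    case (Some p)
    then show ?thesis using assms(1,3) agree_uptoD by (cases p) fastforce
  qed
qed

lemma tstream_None_mono:
  assumes "tstream s" "i \<le> j" "s i = None"
  shows "s j = None"
  using assms(2,3) by (induction j rule: dec_induct) (use assms(1) in \<open>auto simp: tstream_def\<close>)

lemma stamp0_ordered:
  assumes "tstream s" shows "ordered_str (stamp0 s)"
  unfolding ordered_str_def
proof (intro conjI allI impI)
  fix i j assume "i \<le> j" "stamp0 s j \<noteq> None"
  then show "stamp0 s i \<noteq> None" using tstream_None_mono[OF assms, of i j] by (fastforce simp: stamp0_def)
next
  fix i j v w t u assume a: "i \<le> j" "stamp0 s i = Some (v, t)" "stamp0 s j = Some (w, u)"
  then obtain t1 u1 where "s i = Some (v, t1)" "t = (t1, 0)" "s j = Some (w, u1)" "u = (u1, 0)"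
    by (auto simp: stamp0_def)
  then show "t \<le> u" using assms a(1) by (auto simp: tstream_def)
qed

lemma strip_None: "strip s i = None \<longleftrightarrow> s i = None"
  by (simp add: strip_def)

lemma strip_SomeD: "strip s i = Some (v, t) \<Longrightarrow> \<exists>m. s i = Some (v, (t, m))"
  unfolding strip_def by (cases "s i") auto

lemma strip_SomeI: "s i = Some (v, (t, m)) \<Longrightarrow> strip s i = Some (v, t)"
  unfolding strip_def by simp

lemma strip_stamp0: "strip (stamp0 s) = s"
proof
  fix i show "strip (stamp0 s) i = s i"
    by (cases "s i") (auto simp: strip_def stamp0_def split_beta)
qed

lemma tstream_strip:
  assumes n: "ordered_str s"
    and d: "(\<forall>i. s i \<noteq> None) \<Longrightarrow> \<forall>B. \<exists>i v t. s i = Some (v, t) \<and> B < fst t"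
  shows "tstream (strip s)"
  unfolding tstream_def
proof (intro conjI allI impI)
  fix i assume "strip s i = None"
  then have "s i = None" by (simp add: strip_None)
  then have "s (Suc i) = None" using n unfolding ordered_str_def by (meson le_SucI order_refl)
  then show "strip s (Suc i) = None" by (simp add: strip_None)
next
  fix i j v w t u assume a: "i \<le> j" "strip s i = Some (v, t)" "strip s j = Some (w, u)"
  obtain m where m: "s i = Some (v, (t, m))" using strip_SomeD[OF a(2)] by blast
  obtain m' where m': "s j = Some (w, (u, m'))" using strip_SomeD[OF a(3)] by blast
  have "(t, m) \<le> (u, m')" using n a(1) m m' unfolding ordered_str_def by blast
  then show "t \<le> u" by (auto simp: less_eq_prod_def)
next
  fix B assume "\<forall>i. strip s i \<noteq> None"
  then have "\<forall>i. s i \<noteq> None" by (simp add: strip_None)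
  then obtain i v t where it: "s i = Some (v, t)" "B < fst t" using d by blast
  have "strip s i = Some (v, fst t)" using it(1) by (intro strip_SomeI[where m="snd t"]) simp
  then show "\<exists>i t v. strip s i = Some (v, t) \<and> B < t" using it(2) by blast
qed

definition mono_events :: "(nat \<Rightarrow> ('v list \<times> 't::order) option) \<Rightarrow> bool" where
  "mono_events ev \<longleftrightarrow> (\<forall>k k' l w. k' \<le> k \<longrightarrow> ev k = Some (l, w) \<longrightarrow> (\<exists>l' w'. ev k' = Some (l', w') \<and> w' \<le> w))"

lemma cum_Suc: "cum ev (Suc k) = cum ev k + (case ev k of None \<Rightarrow> 0 | Some (xs, _) \<Rightarrow> length xs)"
  by (simp add: cum_def)

lemma cum_mono: "k \<le> k' \<Longrightarrow> cum ev k \<le> cum ev k'"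
  by (induction k' rule: dec_induct) (auto simp: cum_Suc)

lemma concat_str_SomeD:
  assumes "concat_str ev i = Some (v, t)"
  shows "\<exists>k l. ev k = Some (l, t) \<and> i < cum ev (Suc k) \<and> cum ev k \<le> i
     \<and> v = l ! (i - cum ev k) \<and> (\<forall>k'. i < cum ev (Suc k') \<longrightarrow> k \<le> k')"
proof -
  have ex: "\<exists>k. i < cum ev (Suc k)"
    using assms by (auto simp: concat_str_def split: if_splits)
  define k where "k = (LEAST k. i < cum ev (Suc k))"
  have k1: "i < cum ev (Suc k)" unfolding k_def using ex by (rule LeastI_ex)
  have k2: "\<forall>k'. i < cum ev (Suc k') \<longrightarrow> k \<le> k'" unfolding k_def by (auto intro: Least_le)
  have k3: "cum ev k \<le> i"
  proof (cases k)
    case 0 then show ?thesis by (simp add: cum_def)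
  next
    case (Suc m)
    then have "\<not> i < cum ev (Suc m)" using k2 by force
    then show ?thesis using Suc by simp
  qed
  have "concat_str ev i = (case ev k of None \<Rightarrow> None | Some (xs, t) \<Rightarrow> Some (xs ! (i - cum ev k), t))"
    using ex unfolding concat_str_def Let_def k_def[symmetric] by simp
  with assms k1 k2 k3 show ?thesis
    by (auto split: option.splits)
qed

lemma concat_str_block:
  assumes "ev k = Some (l, t)" "cum ev k \<le> i" "i < cum ev (Suc k)"
  shows "concat_str ev i = Some (l ! (i - cum ev k), t)"
proof -
  have ex: "\<exists>k. i < cum ev (Suc k)" using assms by auto
  have "(LEAST k. i < cum ev (Suc k)) = k"
  proof (rule Least_equality)
    show "i < cum ev (Suc k)" by fact
  next
    fix y assume "i < cum ev (Suc y)"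
    show "k \<le> y"
    proof (rule ccontr)
      assume "\<not> k \<le> y"
      then have "Suc y \<le> k" by simp
      then have "cum ev (Suc y) \<le> cum ev k" by (rule cum_mono)
      with \<open>i < cum ev (Suc y)\<close> assms(2) show False by simp
    qed
  qed
  then show ?thesis using ex assms(1) by (simp add: concat_str_def Let_def)
qed

lemma cum_agree: "(\<forall>k'<K. ev k' = ev' k') \<Longrightarrow> cum ev K = cum ev' K"
  by (simp add: cum_def)

lemma concat_str_agree:
  assumes "concat_str ev i = Some (v, t)"
    and "\<And>k' k l. ev k = Some (l, t) \<Longrightarrow> k' \<le> k \<Longrightarrow> ev' k' = ev k'"
  shows "concat_str ev' i = Some (v, t)"
proof -
  obtain k l where k: "ev k = Some (l, t)" "i < cum ev (Suc k)" "cum ev k \<le> i" "v = l ! (i - cum ev k)"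
    using concat_str_SomeD[OF assms(1)] by blast
  have ag: "\<forall>k'<Suc k. ev k' = ev' k'" using assms(2)[OF k(1)] by (metis less_Suc_eq_le)
  have c1: "cum ev' (Suc k) = cum ev (Suc k)" using cum_agree[OF ag] by simp
  have c2: "cum ev' k = cum ev k" using ag by (intro cum_agree[symmetric]) auto
  have "ev' k = Some (l, t)" using ag k(1) by auto
  then show ?thesis using concat_str_block[of ev' k l t i] k c1 c2 by simp
qed

lemma concat_str_agree_upto:
  assumes "mono_events ev" "mono_events ev'"
    and "\<And>k l w. ev k = Some (l, w) \<Longrightarrow> w \<le> \<sigma> \<Longrightarrow> ev' k = ev k"
    and "\<And>k l w. ev' k = Some (l, w) \<Longrightarrow> w \<le> \<sigma> \<Longrightarrow> ev k = ev' k"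
  shows "agree_upto \<sigma> (concat_str ev) (concat_str ev')"
  unfolding agree_upto_def
proof (intro allI impI iffI)
  fix i v t assume t: "t \<le> \<sigma>"
  { assume "concat_str ev i = Some (v, t)"
    then show "concat_str ev' i = Some (v, t)"
    proof (rule concat_str_agree)
      fix k' k l assume "ev k = Some (l, t)" "k' \<le> k"
      then obtain l' w' where "ev k' = Some (l', w')" "w' \<le> t"
        using assms(1) unfolding mono_events_def by blast
      then show "ev' k' = ev k'" using assms(3) t by auto
    qed }
  { assume "concat_str ev' i = Some (v, t)"
    then show "concat_str ev i = Some (v, t)"
    proof (rule concat_str_agree)
      fix k' k l assume "ev' k = Some (l, t)" "k' \<le> k"
      then obtain l' w' where "ev' k' = Some (l', w')" "w' \<le> t"
        using assms(2) unfolding mono_events_def by blast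
      then show "ev k' = ev' k'" using assms(4) t by auto
    qed }
qed

lemma concat_str_ordered:
  assumes "mono_events ev"
  shows "ordered_str (concat_str ev)"
  unfolding ordered_str_def
proof (intro conjI allI impI)
  fix i j assume ij: "i \<le> j" and "concat_str ev j \<noteq> None"
  then obtain v t where "concat_str ev j = Some (v, t)" by auto
  from concat_str_SomeD[OF this] obtain k l where k: "ev k = Some (l, t)" "j < cum ev (Suc k)" by blast
  define k0 where "k0 = (LEAST k. i < cum ev (Suc k))"
  have ex: "\<exists>k. i < cum ev (Suc k)" using k ij by (intro exI[of _ k]) simp
  have "k0 \<le> k" unfolding k0_def using k ij by (intro Least_le) simp
  then obtain l' w' where "ev k0 = Some (l', w')" using assms k(1) unfolding mono_events_def by blast
  then show "concat_str ev i \<noteq> None" using ex by (simp add: concat_str_def k0_def[symmetric] Let_def)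
next
  fix i j v w t u assume ij: "i \<le> j" and i: "concat_str ev i = Some (v, t)" and j: "concat_str ev j = Some (w, u)"
  from concat_str_SomeD[OF i] obtain ki li where ki: "ev ki = Some (li, t)" "\<forall>k'. i < cum ev (Suc k') \<longrightarrow> ki \<le> k'" by blast
  from concat_str_SomeD[OF j] obtain kj lj where kj: "ev kj = Some (lj, u)" "j < cum ev (Suc kj)" by blast
  have "ki \<le> kj" using ki(2) kj(2) ij by auto
  then obtain l' w' where "ev ki = Some (l', w')" "w' \<le> u" using assms kj(1) unfolding mono_events_def by blast
  then show "t \<le> u" using ki(1) by simp
qed

lemma concat_str_divergent:
  assumes em: "mono_events ev" and mf: "mono (f :: nat \<Rightarrow> real)" and df: "\<forall>B. \<exists>k. B < f k"
    and lb: "\<And>k l w. ev k = Some (l, w) \<Longrightarrow> f k \<le> fst w"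
    and all: "\<forall>i. concat_str ev i \<noteq> None"
  shows "\<forall>B. \<exists>i v t. concat_str ev i = Some (v, t) \<and> B < fst t"
proof
  fix B
  obtain K where K: "B < f K" using df by blast
  define i where "i = cum ev (Suc K)"
  obtain v t where vt: "concat_str ev i = Some (v, t)" using all by (metis not_None_eq surj_pair)
  obtain k l where k: "ev k = Some (l, t)" "i < cum ev (Suc k)" using concat_str_SomeD[OF vt] by blast
  have "K < k"
  proof (rule ccontr)
    assume "\<not> K < k" then have "Suc k \<le> Suc K" by simp
    then have "cum ev (Suc k) \<le> i" unfolding i_def by (rule cum_mono)
    then show False using k(2) by simp
  qed
  then have "f K \<le> f k" using mf by (simp add: monoD)
  then have "B < fst t" using K lb[OF k(1)] by simp
  then show "\<exists>i v t. concat_str ev i = Some (v, t) \<and> B < fst t" using vt by blast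
qed

definition written_upto :: "('v, sdtime) str \<Rightarrow> sdtime \<Rightarrow> nat set" where
  "written_upto s \<tau> = {i. s i \<noteq> None \<and> stamp s i \<le> \<tau>}"

lemma written_upto_down:
  assumes "ordered_str s" "j \<in> written_upto s \<tau>" "i \<le> j" shows "i \<in> written_upto s \<tau>"
proof -
  obtain w u where j: "s j = Some (w, u)" "u \<le> \<tau>" using assms(2) unfolding written_upto_def stamp_def
    by (cases "s j") auto
  obtain v t where "s i = Some (v, t)" "t \<le> u" using ordered_str_down[OF assms(1) j(1) assms(3)] by blast
  then show ?thesis using j(2) unfolding written_upto_def stamp_def by simp
qed

lemma written_upto_before_eq:
  assumes "agree_before \<sigma> s s'" "\<tau> < \<sigma>" "i \<in> written_upto s \<tau>" shows "s i = s' i"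
proof -
  obtain v t where "s i = Some (v, t)" "t \<le> \<tau>" using assms(3) unfolding written_upto_def stamp_def
    by (cases "s i") auto
  then show ?thesis using assms(1,2) unfolding agree_before_def by (metis order.strict_trans1)
qed

lemma written_upto_agree:
  assumes "agree_before \<sigma> s s'" "\<tau> < \<sigma>"
  shows "written_upto s \<tau> = written_upto s' \<tau>"
proof (intro set_eqI iffI)
  fix i assume i: "i \<in> written_upto s \<tau>"
  then show "i \<in> written_upto s' \<tau>"
    using written_upto_before_eq[OF assms i] by (simp add: written_upto_def stamp_def)
next
  fix i assume i: "i \<in> written_upto s' \<tau>"
  then show "i \<in> written_upto s \<tau>"
    using written_upto_before_eq[OF agree_before_sym[OF assms(1)] assms(2) i]
    by (simp add: written_upto_def stamp_def)
qed

lemma written_upto_less_card: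
  assumes "ordered_str s" "i < card (written_upto s \<tau>)" shows "i \<in> written_upto s \<tau>"
proof (rule ccontr)
  assume i: "i \<notin> written_upto s \<tau>"
  have "written_upto s \<tau> \<subseteq> {..<i}"
  proof
    fix j assume "j \<in> written_upto s \<tau>"
    then show "j \<in> {..<i}" using i written_upto_down[OF assms(1), of j \<tau> i] by (cases "i \<le> j") auto
  qed
  then have "card (written_upto s \<tau>) \<le> i" by (metis card_lessThan card_mono finite_lessThan)
  with assms(2) show False by simp
qed

lemma written_upto_Greatest:
  assumes "ordered_str s" "written_upto s \<tau> \<noteq> {}"
  shows "(GREATEST i. i \<in> written_upto s \<tau>) \<in> written_upto s \<tau>"
proof (cases "finite (written_upto s \<tau>)")
  case True
  then obtain b where "\<forall>x \<in> written_upto s \<tau>. x \<le> b" using finite_nat_set_iff_bounded_le by blast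
  then show ?thesis using assms(2) GreatestI_ex_nat[of "\<lambda>i. i \<in> written_upto s \<tau>" b] by blast
next
  case False
  have "i \<in> written_upto s \<tau>" for i
  proof -
    obtain j where "i \<le> j" "j \<in> written_upto s \<tau>"
      using False unfolding infinite_nat_iff_unbounded_le by blast
    then show ?thesis using written_upto_down[OF assms(1)] by blast
  qed
  then show ?thesis by blast
qed

lemma reg_val_written_upto:
  "reg_val s \<tau> = (if written_upto s \<tau> = {} then None
                  else Some (val s (GREATEST i. i \<in> written_upto s \<tau>)))"
  unfolding reg_val_def written_upto_def mem_Collect_eq Collect_empty_eq by simp

lemma reg_val_cong:
  assumes "ordered_str s" "agree_before \<sigma> s s'" "\<tau> < \<sigma>"
  shows "reg_val s \<tau> = reg_val s' \<tau>"
proof -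
  have W: "written_upto s \<tau> = written_upto s' \<tau>" by (rule written_upto_agree[OF assms(2,3)])
  have "s (GREATEST i. i \<in> written_upto s \<tau>) = s' (GREATEST i. i \<in> written_upto s \<tau>)"
    if "written_upto s \<tau> \<noteq> {}"
    using written_upto_before_eq[OF assms(2,3) written_upto_Greatest[OF assms(1) that]] .
  then show ?thesis unfolding reg_val_written_upto W by (simp add: val_def)
qed

lemma cnt_eq_card: "cnt s \<tau> = card (written_upto s \<tau>)"
  by (simp add: cnt_def written_upto_def)

lemma merge_event_cong:
  fixes H H' :: "('c, 'v) hist"
  assumes ag: "\<forall>c \<in> set cs. ordered_str (H c) \<and> agree_before \<sigma> (H c) (H' c)"
    and "mono (rel N n)" and "(rel N n k, 1) \<le> \<sigma>"
  shows "merge_event N n cs H k = merge_event N n cs H' k"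
proof -
  have lt: "(rel N n k, 0::nat) < \<sigma>" using assms(3) by (auto simp: less_eq_prod_def less_prod_def)
  have "rel N n (k - 1) \<le> rel N n k" using assms(2) by (simp add: monoD)
  then have lt': "(rel N n (k - 1), 0::nat) < \<sigma>" using lt by (auto simp: less_eq_prod_def less_prod_def)
  have cnt_eq: "cnt (H c) \<tau> = cnt (H' c) \<tau>" if "c \<in> set cs" "\<tau> < \<sigma>" for c \<tau>
    using ag that written_upto_agree[of \<sigma> "H c" "H' c" \<tau>] unfolding cnt_eq_card by simp
  have val_eq: "val (H c) i = val (H' c) i" if "c \<in> set cs" "i < cnt (H c) (rel N n k, 0)" for c i
  proof -
    have "i \<in> written_upto (H c) (rel N n k, 0)"
      using that ag written_upto_less_card unfolding cnt_eq_card by blast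
    then have "H c i = H' c i" using that(1) ag written_upto_before_eq[OF _ lt] by blast
    then show ?thesis by (simp add: val_def)
  qed
  show ?thesis unfolding merge_event_def
    using cnt_eq[OF _ lt] cnt_eq[OF _ lt'] val_eq by (auto intro!: arg_cong[where f = concat] map_cong)
qed

lemma merge_events_mono:
  assumes "mono (rel N n)" shows "mono_events (merge_event N n cs H)"
  using assms unfolding mono_events_def merge_event_def by (auto simp: monoD)

definition fire_release :: "('n, 'c, 's, 'v) mimos \<Rightarrow> 'n \<Rightarrow> ('s \<Rightarrow> 'c \<Rightarrow> nat) \<Rightarrow> ('c, 'v) hist
      \<Rightarrow> 's \<Rightarrow> ('c \<Rightarrow> nat) \<Rightarrow> nat \<Rightarrow> nat" where
  "fire_release N n dem H st cns nj =
     (LEAST j. nj \<le> j \<and> (\<forall>x \<in> p_stamps N n dem H st cns. fst x \<le> rel N n j))"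

definition fire_time :: "('n, 'c, 's, 'v) mimos \<Rightarrow> 'n \<Rightarrow> ('s \<Rightarrow> 'c \<Rightarrow> nat) \<Rightarrow> ('c, 'v) hist
      \<Rightarrow> 's \<Rightarrow> ('c \<Rightarrow> nat) \<Rightarrow> nat \<Rightarrow> sdtime \<Rightarrow> sdtime" where
  "fire_time N n dem H st cns nj lt =
     Max ({(rel N n (fire_release N n dem H st cns nj), 0), lt} \<union> p_stamps N n dem H st cns)"

definition write_stamp :: "('n, 'c, 's, 'v) mimos \<Rightarrow> 'n \<Rightarrow> nat \<Rightarrow> sdtime \<Rightarrow> sdtime" where
  "write_stamp N n j \<tau> = (if 0 < dl N n then (rel N n j + dl N n, 0) else (fst \<tau>, Suc (snd \<tau>)))"

definition fifo_reads :: "('n, 'c, 's, 'v) mimos \<Rightarrow> 'n \<Rightarrow> ('s \<Rightarrow> 'c \<Rightarrow> nat) \<Rightarrow> ('c, 'v) hist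
      \<Rightarrow> 's \<Rightarrow> ('c \<Rightarrow> nat) \<Rightarrow> 'c \<Rightarrow> 'v list" where
  "fifo_reads N n dem H st cns =
     (\<lambda>c. if c \<in> infifos N n then map (val (H c)) [cns c..<cns c + dem st c] else [])"

definition reg_reads :: "('n, 'c, 's, 'v) mimos \<Rightarrow> 'n \<Rightarrow> ('c, 'v) hist \<Rightarrow> sdtime \<Rightarrow> 'c \<Rightarrow> 'v option" where
  "reg_reads N n H \<tau> = (\<lambda>c. if c \<in> inregs N n then reg_val (H c) \<tau> else None)"

definition conf_ready :: "('n, 'c, 's, 'v) mimos \<Rightarrow> 'n \<Rightarrow> ('s \<Rightarrow> 'c \<Rightarrow> nat) \<Rightarrow> ('c, 'v) hist
      \<Rightarrow> ('c, 's) conf \<Rightarrow> bool" where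
  "conf_ready N n dem H cf = (case cf of (st, cns, _) \<Rightarrow> p_ready N n dem H st cns)"

lemma p_step_eq:
  "p_step N n dem stp H (st, cns, nj, lt) =
    (let j = fire_release N n dem H st cns nj; \<tau> = fire_time N n dem H st cns nj lt;
         r = stp st (fifo_reads N n dem H st cns) (reg_reads N n H \<tau>)
     in ((fst r, (\<lambda>c. cns c + (if c \<in> infifos N n then dem st c else 0)), Suc j, \<tau>),
         (write_stamp N n j \<tau>, fst (snd r), snd (snd r))))"
  unfolding p_step_def fire_release_def fire_time_def write_stamp_def fifo_reads_def reg_reads_def Let_def
  by (simp split: prod.split)

lemma p_conf_Suc_eq:
  "p_conf N n i0 dem stp H (Suc k) =
    (case p_conf N n i0 dem stp H k of None \<Rightarrow> None
     | Some cf \<Rightarrow> if conf_ready N n dem H cf then Some (fst (p_step N n dem stp H cf)) else None)"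
  by (simp add: conf_ready_def split: option.split prod.split)

lemma p_event_eq:
  "p_event N n i0 dem stp H k =
    (case p_conf N n i0 dem stp H k of None \<Rightarrow> None
     | Some cf \<Rightarrow> if conf_ready N n dem H cf then Some (snd (p_step N n dem stp H cf)) else None)"
  by (simp add: conf_ready_def p_event_def split: option.split prod.split)

lemma p_event_SomeD:
  "p_event N n i0 dem stp H k = Some e \<Longrightarrow>
    \<exists>cf. p_conf N n i0 dem stp H k = Some cf \<and> conf_ready N n dem H cf \<and> e = snd (p_step N n dem stp H cf)"
  unfolding p_event_eq by (auto split: option.splits if_splits)

lemma p_conf_SucD:
  "p_conf N n i0 dem stp H (Suc k) = Some cf' \<Longrightarrow>
    \<exists>cf. p_conf N n i0 dem stp H k = Some cf \<and> conf_ready N n dem H cf \<and> cf' = fst (p_step N n dem stp H cf)"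
  unfolding p_conf_Suc_eq by (auto split: option.splits if_splits)

lemma p_stamps_finite:
  assumes "finite (chans N)"
  shows "finite (p_stamps N n dem H st cns)"
proof -
  have "p_stamps N n dem H st cns \<subseteq> (\<lambda>(c, i). stamp (H c) i) ` (SIGMA c:infifos N n. {cns c..<cns c + dem st c})"
  proof
    fix x assume "x \<in> p_stamps N n dem H st cns"
    then obtain c i where ci: "x = stamp (H c) i" "c \<in> infifos N n" "cns c \<le> i" "i < cns c + dem st c"
      unfolding p_stamps_def by blast
    show "x \<in> (\<lambda>(c, i). stamp (H c) i) ` (SIGMA c:infifos N n. {cns c..<cns c + dem st c})"
      by (rule rev_image_eqI[of "(c, i)"]) (use ci in auto)
  qed
  moreover have "finite (infifos N n)" using assms unfolding infifos_def by simp
  ultimately show ?thesis by (meson finite_SigmaI finite_atLeastLessThan finite_imageI finite_subset)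
qed

lemma p_stamps_cong:
  assumes tok: "\<And>c i. c \<in> infifos N n \<Longrightarrow> cns c \<le> i \<Longrightarrow> i < cns c + dem st c \<Longrightarrow> H' c i = H c i"
  shows "p_stamps N n dem H' st cns = p_stamps N n dem H st cns"
  unfolding p_stamps_def
proof (intro Collect_cong iffI)
  fix x assume "\<exists>c i. x = stamp (H' c) i \<and> c \<in> infifos N n \<and> cns c \<le> i \<and> i < cns c + dem st c"
  then show "\<exists>c i. x = stamp (H c) i \<and> c \<in> infifos N n \<and> cns c \<le> i \<and> i < cns c + dem st c"
    using tok by (metis stamp_def)
next
  fix x assume "\<exists>c i. x = stamp (H c) i \<and> c \<in> infifos N n \<and> cns c \<le> i \<and> i < cns c + dem st c"
  then show "\<exists>c i. x = stamp (H' c) i \<and> c \<in> infifos N n \<and> cns c \<le> i \<and> i < cns c + dem st c"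
    using tok by (metis stamp_def)
qed

lemma fire_tokens_cong:
  assumes ag: "\<forall>c\<in>chans N. agree_before \<sigma> (H c) (H' c)"
    and rd: "conf_ready N n dem H (st, cns, nj, lt)"
    and before: "\<forall>x \<in> p_stamps N n dem H st cns. x < \<sigma>"
    and c: "c \<in> infifos N n" and i: "cns c \<le> i" "i < cns c + dem st c"
  shows "H' c i = H c i"
proof -
  have "H c i \<noteq> None" using rd c i unfolding conf_ready_def p_ready_def by auto
  then obtain v t where vt: "H c i = Some (v, t)" by fastforce
  have "stamp (H c) i \<in> p_stamps N n dem H st cns" unfolding p_stamps_def using c i by blast
  then have "t < \<sigma>" using before vt by (simp add: stamp_def)
  moreover have "agree_before \<sigma> (H c) (H' c)" using ag c by (simp add: infifos_def)
  ultimately have "H' c i = Some (v, t)" using vt unfolding agree_before_def by blast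
  then show ?thesis using vt by simp
qed

definition proc_events :: "('n, 'c, 's, 'v) mimos \<Rightarrow> 'n \<Rightarrow> 's \<Rightarrow> ('s \<Rightarrow> 'c \<Rightarrow> nat)
      \<Rightarrow> ('s \<Rightarrow> ('c \<Rightarrow> 'v list) \<Rightarrow> ('c \<Rightarrow> 'v option) \<Rightarrow> 's \<times> ('c \<Rightarrow> 'v list) \<times> ('c \<Rightarrow> 'v option))
      \<Rightarrow> ('c, 'v) hist \<Rightarrow> 'c \<Rightarrow> nat \<Rightarrow> ('v list \<times> sdtime) option" where
  "proc_events N n i0 dem stp H c = (\<lambda>k. case p_event N n i0 dem stp H k of
                              None \<Rightarrow> None
                            | Some (w, fo, ro) \<Rightarrow>
                                Some (if is_reg N c then (case ro c of None \<Rightarrow> [] | Some v \<Rightarrow> [v])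
                                      else fo c, w))"

lemma node_out_Proc: "kind N n = Proc i0 dem stp \<Longrightarrow> node_out N n H c = concat_str (proc_events N n i0 dem stp H c)"
  by (simp add: node_out_def proc_events_def)

lemma node_out_Merge: "kind N n = Merge cs \<Longrightarrow> node_out N n H c = concat_str (merge_event N n cs H)"
  by (simp add: node_out_def)

lemma proc_events_SomeD: "proc_events N n i0 dem stp H c k = Some (l, w) \<Longrightarrow> \<exists>fo ro. p_event N n i0 dem stp H k = Some (w, fo, ro)"
  unfolding proc_events_def by (auto split: option.splits)

lemma proc_events_SomeI: "p_event N n i0 dem stp H k = Some (w, fo, ro) \<Longrightarrow> \<exists>l. proc_events N n i0 dem stp H c k = Some (l, w)"
  unfolding proc_events_def by auto

locale timed_node =
  fixes N :: "('n, 'c, 's, 'v) mimos" and n :: 'n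
  assumes mono_rel: "mono (rel N n)"
    and div_rel: "\<forall>B. \<exists>k. B < rel N n k"
    and dl_nn: "0 \<le> dl N n"
    and fin_chans: "finite (chans N)"
begin

lemma rel_mono: "j \<le> j' \<Longrightarrow> rel N n j \<le> rel N n j'"
  using mono_rel by (simp add: monoD)

lemma fire_release_props:
  shows "nj \<le> fire_release N n dem H st cns nj"
    and "\<forall>x \<in> p_stamps N n dem H st cns. fst x \<le> rel N n (fire_release N n dem H st cns nj)"
proof -
  define S where "S = p_stamps N n dem H st cns"
  have fS: "finite S" unfolding S_def by (rule p_stamps_finite[OF fin_chans])
  define M where "M = Max (insert 0 (fst ` S))"
  have M: "\<forall>x\<in>S. fst x \<le> M" unfolding M_def using fS by auto
  obtain k where k: "M < rel N n k" using div_rel by blast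
  have "nj \<le> max nj k \<and> (\<forall>x \<in> S. fst x \<le> rel N n (max nj k))"
    using M k rel_mono[of k "max nj k"] by force
  then have "\<exists>j. nj \<le> j \<and> (\<forall>x \<in> S. fst x \<le> rel N n j)" by blast
  then have "nj \<le> fire_release N n dem H st cns nj \<and> (\<forall>x \<in> S. fst x \<le> rel N n (fire_release N n dem H st cns nj))"
    unfolding fire_release_def S_def[symmetric] by (rule LeastI_ex)
  then show "nj \<le> fire_release N n dem H st cns nj"
    and "\<forall>x \<in> p_stamps N n dem H st cns. fst x \<le> rel N n (fire_release N n dem H st cns nj)"
    unfolding S_def by blast+
qed

lemma fire_time_props:
  assumes "fst lt \<le> rel N n nj"
  shows "fst (fire_time N n dem H st cns nj lt) = rel N n (fire_release N n dem H st cns nj)"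
    and "lt \<le> fire_time N n dem H st cns nj lt"
    and "\<forall>x \<in> p_stamps N n dem H st cns. x \<le> fire_time N n dem H st cns nj lt"
proof -
  define S where "S = p_stamps N n dem H st cns"
  define j where "j = fire_release N n dem H st cns nj"
  define A where "A = {(rel N n j, 0), lt} \<union> S"
  have fA: "finite A" "A \<noteq> {}" unfolding A_def S_def using p_stamps_finite[OF fin_chans] by auto
  have T: "fire_time N n dem H st cns nj lt = Max A" unfolding fire_time_def A_def S_def j_def by simp
  have ge: "\<And>x. x \<in> A \<Longrightarrow> x \<le> Max A" using fA by simp
  have jp: "nj \<le> j" "\<forall>x \<in> S. fst x \<le> rel N n j" unfolding j_def S_def by (rule fire_release_props)+
  have "\<And>x. x \<in> A \<Longrightarrow> fst x \<le> rel N n j"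
    unfolding A_def using jp assms rel_mono[OF jp(1)] by auto
  then have "fst (Max A) \<le> rel N n j" using fA by simp
  moreover have "(rel N n j, 0) \<le> Max A" using ge unfolding A_def by simp
  then have "rel N n j \<le> fst (Max A)" by (cases "Max A") (auto simp: less_eq_prod_def)
  ultimately show "fst (fire_time N n dem H st cns nj lt) = rel N n (fire_release N n dem H st cns nj)"
    unfolding T j_def by simp
  show "lt \<le> fire_time N n dem H st cns nj lt"
    and "\<forall>x \<in> p_stamps N n dem H st cns. x \<le> fire_time N n dem H st cns nj lt"
    using ge unfolding T A_def S_def by simp_all
qed

text \<open>The source of causality: with deadline zero the write takes the next microstep.\<close>

lemma write_stamp_gt: "fst \<tau> = rel N n j \<Longrightarrow> \<tau> < write_stamp N n j \<tau>"
  unfolding write_stamp_def by (cases \<tau>) (auto simp: less_prod_def')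

lemma write_stamp_ge_rel: "fst \<tau> = rel N n j \<Longrightarrow> rel N n j \<le> fst (write_stamp N n j \<tau>)"
  unfolding write_stamp_def using dl_nn by auto

lemma write_stamp_mono:
  assumes "fst \<tau> = rel N n j" "fst \<tau>' = rel N n j'" "j \<le> j'" "\<tau> \<le> \<tau>'"
  shows "write_stamp N n j \<tau> \<le> write_stamp N n j' \<tau>'"
proof (cases "0 < dl N n")
  case True then show ?thesis unfolding write_stamp_def using rel_mono[OF assms(3)] by simp
next
  case False then show ?thesis unfolding write_stamp_def using assms(4)
    by (cases \<tau>; cases \<tau>') (auto simp: less_eq_prod_def)
qed

lemma p_conf_invariant:
  assumes "p_conf N n i0 dem stp H k = Some (st, cns, nj, lt)"
  shows "fst lt \<le> rel N n nj \<and> k \<le> nj"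
  using assms
proof (induction k arbitrary: st cns nj lt)
  case 0 then show ?case by auto
next
  case (Suc k)
  obtain st0 cns0 nj0 lt0 where c0: "p_conf N n i0 dem stp H k = Some (st0, cns0, nj0, lt0)"
    "(st, cns, nj, lt) = fst (p_step N n dem stp H (st0, cns0, nj0, lt0))"
    using p_conf_SucD[OF Suc.prems] by (metis prod_cases4)
  define j0 where "j0 = fire_release N n dem H st0 cns0 nj0"
  have i: "fst lt0 \<le> rel N n nj0" "k \<le> nj0" using Suc.IH[OF c0(1)] by auto
  have "nj = Suc j0" "lt = fire_time N n dem H st0 cns0 nj0 lt0"
    using c0(2) by (simp_all add: p_step_eq Let_def j0_def)
  moreover have "nj0 \<le> j0" unfolding j0_def by (rule fire_release_props)
  ultimately show ?case
    using fire_time_props(1)[OF i(1)] i(2) rel_mono[of j0 "Suc j0"] unfolding j0_def by auto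
qed

lemma p_event_conf:
  assumes "p_event N n i0 dem stp H k = Some e"
  obtains st cns nj lt where "p_conf N n i0 dem stp H k = Some (st, cns, nj, lt)"
    and "conf_ready N n dem H (st, cns, nj, lt)"
    and "fst lt \<le> rel N n nj" "k \<le> nj"
    and "snd (p_step N n dem stp H (st, cns, nj, lt)) = e"
    and "fst e = write_stamp N n (fire_release N n dem H st cns nj) (fire_time N n dem H st cns nj lt)"
proof -
  obtain cf where cf: "p_conf N n i0 dem stp H k = Some cf" "conf_ready N n dem H cf"
    "e = snd (p_step N n dem stp H cf)"
    using p_event_SomeD[OF assms] by blast
  obtain st cns nj lt where c: "cf = (st, cns, nj, lt)" by (cases cf)
  have "fst e = write_stamp N n (fire_release N n dem H st cns nj) (fire_time N n dem H st cns nj lt)"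
    using cf(3) c by (simp add: p_step_eq Let_def)
  with cf c p_conf_invariant[OF cf(1)[unfolded c]] show thesis using that by blast
qed

lemma p_event_ge_rel:
  assumes "p_event N n i0 dem stp H k = Some e"
  shows "rel N n k \<le> fst (fst e)"
proof -
  obtain st cns nj lt where a: "fst lt \<le> rel N n nj" "k \<le> nj"
    "fst e = write_stamp N n (fire_release N n dem H st cns nj) (fire_time N n dem H st cns nj lt)"
    using p_event_conf[OF assms] by metis
  have "rel N n k \<le> rel N n (fire_release N n dem H st cns nj)"
    using a(2) fire_release_props(1) rel_mono order_trans by blast
  also have "\<dots> \<le> fst (fst e)" using write_stamp_ge_rel[OF fire_time_props(1)[OF a(1)]] a(3) by simp
  finally show ?thesis .
qed

lemma p_event_stamp_range:
  assumes "p_event N n i0 dem stp H k = Some e"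
  shows "fst (fst e) \<in> range (rel N n) \<union> range (\<lambda>j. rel N n j + dl N n)"
proof -
  obtain st cns nj lt where a: "fst lt \<le> rel N n nj"
    "fst e = write_stamp N n (fire_release N n dem H st cns nj) (fire_time N n dem H st cns nj lt)"
    using p_event_conf[OF assms] by metis
  then show ?thesis using fire_time_props(1)[OF a(1)] unfolding write_stamp_def by auto
qed

lemma p_event_step_mono:
  assumes "p_event N n i0 dem stp H (Suc k) = Some e"
  shows "\<exists>e'. p_event N n i0 dem stp H k = Some e' \<and> fst e' \<le> fst e"
proof -
  obtain st cns nj lt where a: "p_conf N n i0 dem stp H (Suc k) = Some (st, cns, nj, lt)"
    "fst lt \<le> rel N n nj"
    "fst e = write_stamp N n (fire_release N n dem H st cns nj) (fire_time N n dem H st cns nj lt)"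
    using p_event_conf[OF assms] by metis
  obtain cf0 where c0: "p_conf N n i0 dem stp H k = Some cf0" "conf_ready N n dem H cf0"
      "(st, cns, nj, lt) = fst (p_step N n dem stp H cf0)"
    using p_conf_SucD[OF a(1)] by blast
  obtain st0 cns0 nj0 lt0 where cf0: "cf0 = (st0, cns0, nj0, lt0)" by (cases cf0)
  define j0 where "j0 = fire_release N n dem H st0 cns0 nj0"
  define t0 where "t0 = fire_time N n dem H st0 cns0 nj0 lt0"
  have nj: "nj = Suc j0" and lt: "lt = t0"
    using c0(3) cf0 by (simp_all add: p_step_eq Let_def j0_def t0_def)
  have t0: "fst t0 = rel N n j0"
    using fire_time_props(1)[OF conjunct1[OF p_conf_invariant[OF c0(1)[unfolded cf0]]]]
    unfolding t0_def j0_def .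
  define e' where "e' = snd (p_step N n dem stp H cf0)"
  have "p_event N n i0 dem stp H k = Some e'" unfolding p_event_eq e'_def using c0 by simp
  moreover have "fst e' = write_stamp N n j0 t0"
    unfolding e'_def cf0 by (simp add: p_step_eq Let_def j0_def t0_def)
  moreover have "nj \<le> fire_release N n dem H st cns nj" by (rule fire_release_props(1))
  then have "write_stamp N n j0 t0 \<le> fst e"
    unfolding a(3) using write_stamp_mono[OF t0 fire_time_props(1)[OF a(2)]]
      fire_time_props(2)[OF a(2)] nj lt by simp
  ultimately show ?thesis by auto
qed

lemma p_event_mono:
  assumes "p_event N n i0 dem stp H k = Some e" "k' \<le> k"
  shows "\<exists>e'. p_event N n i0 dem stp H k' = Some e' \<and> fst e' \<le> fst e"
  using assms(2,1)
proof (induction k arbitrary: e rule: dec_induct)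
  case base then show ?case by auto
next
  case (step m)
  obtain e1 where "p_event N n i0 dem stp H m = Some e1" "fst e1 \<le> fst e"
    using p_event_step_mono[OF step.prems] by blast
  with step.IH show ?case by (meson order_trans)
qed

lemma fire_cong:
  fixes H H' :: "('c, 'v) hist"
  assumes ag: "\<forall>c\<in>chans N. ordered_str (H c) \<and> agree_before \<sigma> (H c) (H' c)"
    and lt: "fst lt \<le> rel N n nj"
    and rd: "conf_ready N n dem H (st, cns, nj, lt)"
    and le: "fst (snd (p_step N n dem stp H (st, cns, nj, lt))) \<le> \<sigma>"
  shows "conf_ready N n dem H' (st, cns, nj, lt)"
    and "p_step N n dem stp H' (st, cns, nj, lt) = p_step N n dem stp H (st, cns, nj, lt)"
proof -
  define j where "j = fire_release N n dem H st cns nj"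
  define \<tau> where "\<tau> = fire_time N n dem H st cns nj lt"
  have "fst (snd (p_step N n dem stp H (st, cns, nj, lt))) = write_stamp N n j \<tau>"
    by (simp add: p_step_eq Let_def j_def \<tau>_def)
  then have \<tau>\<sigma>: "\<tau> < \<sigma>" using write_stamp_gt fire_time_props(1)[OF lt] le unfolding j_def \<tau>_def
    by (metis order.strict_trans2)
  have "\<forall>x \<in> p_stamps N n dem H st cns. x < \<sigma>"
    using fire_time_props(3)[OF lt] \<tau>\<sigma> unfolding \<tau>_def by (meson order.strict_trans1)
  then have tok: "\<And>c i. c \<in> infifos N n \<Longrightarrow> cns c \<le> i \<Longrightarrow> i < cns c + dem st c \<Longrightarrow> H' c i = H c i"
    using fire_tokens_cong[OF _ rd] ag by blast
  show "conf_ready N n dem H' (st, cns, nj, lt)"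
    using rd tok unfolding conf_ready_def p_ready_def by auto
  have S: "p_stamps N n dem H' st cns = p_stamps N n dem H st cns" by (rule p_stamps_cong[OF tok])
  have J: "fire_release N n dem H' st cns nj = j" unfolding fire_release_def j_def S ..
  have T: "fire_time N n dem H' st cns nj lt = \<tau>" unfolding fire_time_def \<tau>_def J[unfolded j_def] S ..
  have FR: "fifo_reads N n dem H' st cns = fifo_reads N n dem H st cns"
    unfolding fifo_reads_def using tok by (auto intro!: map_cong simp: val_def)
  have "reg_val (H c) \<tau> = reg_val (H' c) \<tau>" if "c \<in> inregs N n" for c
    using reg_val_cong[OF _ _ \<tau>\<sigma>] ag that unfolding inregs_def by blast
  then have RR: "reg_reads N n H' \<tau> = reg_reads N n H \<tau>" unfolding reg_reads_def by auto
  show "p_step N n dem stp H' (st, cns, nj, lt) = p_step N n dem stp H (st, cns, nj, lt)"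
    unfolding p_step_eq Let_def using J T FR RR by (simp add: j_def \<tau>_def)
qed

lemma p_event_cong_step:
  fixes H H' :: "('c, 'v) hist"
  assumes ag: "\<forall>c\<in>chans N. ordered_str (H c) \<and> agree_before \<sigma> (H c) (H' c)"
    and conf: "p_conf N n i0 dem stp H' m = p_conf N n i0 dem stp H m"
    and ev: "p_event N n i0 dem stp H m = Some e" and le: "fst e \<le> \<sigma>"
  shows "p_event N n i0 dem stp H' m = Some e"
    and "p_conf N n i0 dem stp H' (Suc m) = p_conf N n i0 dem stp H (Suc m)"
proof -
  obtain st cns nj lt where a: "p_conf N n i0 dem stp H m = Some (st, cns, nj, lt)"
    "conf_ready N n dem H (st, cns, nj, lt)" "fst lt \<le> rel N n nj"
    "snd (p_step N n dem stp H (st, cns, nj, lt)) = e"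
    using p_event_conf[OF ev] by metis
  have "fst (snd (p_step N n dem stp H (st, cns, nj, lt))) \<le> \<sigma>" using a(4) le by simp
  note fc = fire_cong[OF ag a(3) a(2) this]
  show "p_event N n i0 dem stp H' m = Some e"
    and "p_conf N n i0 dem stp H' (Suc m) = p_conf N n i0 dem stp H (Suc m)"
    unfolding p_event_eq p_conf_Suc_eq using conf a(1,2,4) fc by simp_all
qed

lemma proc_cong:
  fixes H H' :: "('c, 'v) hist"
  assumes ag: "\<forall>c\<in>chans N. ordered_str (H c) \<and> agree_before \<sigma> (H c) (H' c)"
    and ev: "p_event N n i0 dem stp H k = Some e" and le: "fst e \<le> \<sigma>"
  shows "p_event N n i0 dem stp H' k = Some e"
proof -
  have "p_conf N n i0 dem stp H' k' = p_conf N n i0 dem stp H k'" if "k' \<le> k" for k'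
    using that
  proof (induction k')
    case 0 show ?case by simp
  next
    case (Suc m)
    obtain e1 where e1: "p_event N n i0 dem stp H m = Some e1" "fst e1 \<le> fst e"
      using p_event_mono[OF ev, of m] Suc.prems by auto
    have "p_conf N n i0 dem stp H' m = p_conf N n i0 dem stp H m" using Suc by simp
    then show ?case using p_event_cong_step(2)[OF ag _ e1(1) order_trans[OF e1(2) le]] by blast
  qed
  then show ?thesis using p_event_cong_step(1)[OF ag _ ev le] by blast
qed

lemma proc_events_mono: "mono_events (proc_events N n i0 dem stp H c)"
  unfolding mono_events_def
proof (intro allI impI)
  fix k k' l w assume a: "k' \<le> k" "proc_events N n i0 dem stp H c k = Some (l, w)"
  obtain fo ro where "p_event N n i0 dem stp H k = Some (w, fo, ro)" using proc_events_SomeD[OF a(2)] by blast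
  then obtain w' fo' ro' where "p_event N n i0 dem stp H k' = Some (w', fo', ro')" "w' \<le> w"
    using p_event_mono[OF _ a(1)] by (metis fst_conv prod_cases3)
  then show "\<exists>l' w'. proc_events N n i0 dem stp H c k' = Some (l', w') \<and> w' \<le> w"
    by (metis proc_events_SomeI)
qed

lemma proc_events_cong:
  fixes H H' :: "('c, 'v) hist"
  assumes ag: "\<forall>c\<in>chans N. ordered_str (H c) \<and> agree_before \<sigma> (H c) (H' c)"
    and ev: "proc_events N n i0 dem stp H c k = Some (l, w)" and le: "w \<le> \<sigma>"
  shows "proc_events N n i0 dem stp H' c k = proc_events N n i0 dem stp H c k"
proof -
  obtain fo ro where e: "p_event N n i0 dem stp H k = Some (w, fo, ro)" using proc_events_SomeD[OF ev] by blast
  then have "p_event N n i0 dem stp H' k = Some (w, fo, ro)" using proc_cong[OF ag e] le by simp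
  then show ?thesis using e unfolding proc_events_def by simp
qed

lemma proc_events_stamp:
  assumes "proc_events N n i0 dem stp H c k = Some (l, w)"
  shows "rel N n k \<le> fst w" and "fst w \<in> range (rel N n) \<union> range (\<lambda>j. rel N n j + dl N n)"
proof -
  obtain fo ro where e: "p_event N n i0 dem stp H k = Some (w, fo, ro)"
    using proc_events_SomeD[OF assms] by blast
  show "rel N n k \<le> fst w" using p_event_ge_rel[OF e] by simp
  show "fst w \<in> range (rel N n) \<union> range (\<lambda>j. rel N n j + dl N n)" using p_event_stamp_range[OF e] by simp
qed

end

section \<open>Causality of the network functional\<close>

definition node_events :: "('n, 'c, 's, 'v) mimos \<Rightarrow> 'n \<Rightarrow> ('c, 'v) hist \<Rightarrow> 'c
      \<Rightarrow> nat \<Rightarrow> ('v list \<times> sdtime) option" where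
  "node_events N n H c =
     (case kind N n of Proc i0 dem stp \<Rightarrow> proc_events N n i0 dem stp H c | Merge cs \<Rightarrow> merge_event N n cs H)"

lemma node_out_eq: "node_out N n H c = concat_str (node_events N n H c)"
  by (cases "kind N n") (simp_all add: node_events_def node_out_Proc node_out_Merge)

lemma wf_mimos_timed_node: "wf_mimos N \<Longrightarrow> n \<in> nodes N \<Longrightarrow> timed_node N n"
  unfolding wf_mimos_def timed_node_def by blast

lemma wf_mimos_merge_chans: "wf_mimos N \<Longrightarrow> n \<in> nodes N \<Longrightarrow> kind N n = Merge cs \<Longrightarrow> set cs \<subseteq> chans N"
  unfolding wf_mimos_def by blast

lemma wf_mimos_writer: "wf_mimos N \<Longrightarrow> c \<in> chans N \<Longrightarrow> writer N c = Some n \<Longrightarrow> n \<in> nodes N"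
  unfolding wf_mimos_def by blast

lemma node_events_mono:
  assumes "wf_mimos N" "n \<in> nodes N"
  shows "mono_events (node_events N n H c)"
proof -
  interpret timed_node N n by (rule wf_mimos_timed_node[OF assms])
  show ?thesis unfolding node_events_def
    by (cases "kind N n") (simp_all add: proc_events_mono merge_events_mono[OF mono_rel])
qed

lemma node_events_stamp:
  assumes "wf_mimos N" "n \<in> nodes N" and ev: "node_events N n H c k = Some (l, w)"
  shows "rel N n k \<le> fst w" and "fst w \<in> range (rel N n) \<union> range (\<lambda>j. rel N n j + dl N n)"
proof -
  interpret timed_node N n by (rule wf_mimos_timed_node[OF assms(1,2)])
  have "rel N n k \<le> fst w \<and> fst w \<in> range (rel N n) \<union> range (\<lambda>j. rel N n j + dl N n)"
  proof (cases "kind N n")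
    case (Proc i0 dem stp)
    then show ?thesis using ev proc_events_stamp by (simp add: node_events_def)
  next
    case (Merge cs)
    then show ?thesis using ev by (auto simp: node_events_def merge_event_def)
  qed
  then show "rel N n k \<le> fst w" and "fst w \<in> range (rel N n) \<union> range (\<lambda>j. rel N n j + dl N n)"
    by blast+
qed

lemma node_events_cong:
  fixes H H' :: "('c, 'v) hist"
  assumes wf: "wf_mimos N" "n \<in> nodes N"
    and ag: "\<forall>c\<in>chans N. ordered_str (H c) \<and> agree_before \<sigma> (H c) (H' c)"
    and ev: "node_events N n H c k = Some (l, w)" and le: "w \<le> \<sigma>"
  shows "node_events N n H' c k = node_events N n H c k"
proof -
  interpret timed_node N n by (rule wf_mimos_timed_node[OF wf])
  show ?thesis
  proof (cases "kind N n")
    case (Proc i0 dem stp)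
    then show ?thesis using proc_events_cong[OF ag _ le] ev by (simp add: node_events_def)
  next
    case (Merge cs)
    have "\<forall>c \<in> set cs. ordered_str (H c) \<and> agree_before \<sigma> (H c) (H' c)"
      using ag wf_mimos_merge_chans[OF wf Merge] by blast
    moreover have "(rel N n k, 1) \<le> \<sigma>" using ev le Merge by (simp add: node_events_def merge_event_def)
    ultimately have "merge_event N n cs H k = merge_event N n cs H' k" by (rule merge_event_cong[OF _ mono_rel])
    then show ?thesis using Merge by (simp add: node_events_def)
  qed
qed

lemma node_out_cong:
  fixes H H' :: "('c, 'v) hist"
  assumes wf: "wf_mimos N" "n \<in> nodes N"
    and ag: "\<forall>c\<in>chans N. ordered_str (H c) \<and> ordered_str (H' c) \<and> agree_before \<sigma> (H c) (H' c)"
  shows "agree_upto \<sigma> (node_out N n H c) (node_out N n H' c)"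
  unfolding node_out_eq
proof (rule concat_str_agree_upto[OF node_events_mono[OF wf] node_events_mono[OF wf]])
  show "node_events N n H' c k = node_events N n H c k"
    if "node_events N n H c k = Some (l, w)" "w \<le> \<sigma>" for k l w
    using node_events_cong[OF wf _ that] ag by blast
  show "node_events N n H c k = node_events N n H' c k"
    if "node_events N n H' c k = Some (l, w)" "w \<le> \<sigma>" for k l w
    using node_events_cong[OF wf _ that] ag agree_before_sym by blast
qed

definition net_out :: "('n, 'c, 's, 'v) mimos \<Rightarrow> ('c \<Rightarrow> ('v, real) str) \<Rightarrow> ('c, 'v) hist \<Rightarrow> ('c, 'v) hist" where
  "net_out N inp H c = (case writer N c of None \<Rightarrow> stamp0 (inp c) | Some n \<Rightarrow> node_out N n H c)"

lemma is_run_iff_fixpoint: "is_run N inp H \<longleftrightarrow> (\<forall>c\<in>chans N. H c = net_out N inp H c)"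
  by (simp add: is_run_def net_out_def)

lemma net_out_cong:
  fixes H H' :: "('c, 'v) hist"
  assumes wf: "wf_mimos N" and c: "c \<in> chans N"
    and ag: "\<forall>c\<in>chans N. ordered_str (H c) \<and> ordered_str (H' c) \<and> agree_before \<sigma> (H c) (H' c)"
  shows "agree_upto \<sigma> (net_out N inp H c) (net_out N inp H' c)"
proof (cases "writer N c")
  case None then show ?thesis by (simp add: net_out_def agree_upto_def)
next
  case (Some n)
  then show ?thesis using node_out_cong[OF wf wf_mimos_writer[OF wf c Some] ag] by (simp add: net_out_def)
qed

lemma net_out_ordered:
  assumes wf: "wf_mimos N" and ins: "\<forall>c \<in> in_chans N. tstream (inp c)" and c: "c \<in> chans N"
  shows "ordered_str (net_out N inp H c)"
proof (cases "writer N c")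
  case None
  then have "tstream (inp c)" using ins c by (simp add: in_chans_def)
  then show ?thesis using None by (simp add: net_out_def stamp0_ordered)
next
  case (Some n)
  then show ?thesis
    using concat_str_ordered[OF node_events_mono[OF wf wf_mimos_writer[OF wf c Some]]]
    by (simp add: net_out_def node_out_eq)
qed

definition relevant_times :: "('n, 'c, 's, 'v) mimos \<Rightarrow> ('c \<Rightarrow> ('v, real) str) \<Rightarrow> real set" where
  "relevant_times N inp = (\<Union>n\<in>nodes N. range (rel N n) \<union> range (\<lambda>j. rel N n j + dl N n))
                \<union> (\<Union>c\<in>in_chans N. {t. \<exists>i v. inp c i = Some (v, t)})"

definition relevant_stamps :: "('n, 'c, 's, 'v) mimos \<Rightarrow> ('c \<Rightarrow> ('v, real) str) \<Rightarrow> ('v, sdtime) str \<Rightarrow> bool" where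
  "relevant_stamps N inp s \<longleftrightarrow> (\<forall>i v t. s i = Some (v, t) \<longrightarrow> fst t \<in> relevant_times N inp)"

lemma relevant_stampsD: "relevant_stamps N inp s \<Longrightarrow> s i = Some (v, t) \<Longrightarrow> fst t \<in> relevant_times N inp"
  unfolding relevant_stamps_def by blast

lemma relevant_times_node:
  "n \<in> nodes N \<Longrightarrow> x \<in> range (rel N n) \<union> range (\<lambda>j. rel N n j + dl N n) \<Longrightarrow> x \<in> relevant_times N inp"
  unfolding relevant_times_def by blast

lemma relevant_times_input: "c \<in> in_chans N \<Longrightarrow> inp c i = Some (v, t) \<Longrightarrow> t \<in> relevant_times N inp"
  unfolding relevant_times_def by blast

lemma net_out_relevant:
  assumes wf: "wf_mimos N" and c: "c \<in> chans N"
  shows "relevant_stamps N inp (net_out N inp H c)"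
proof (cases "writer N c")
  case None
  then have "c \<in> in_chans N" using c by (simp add: in_chans_def)
  then show ?thesis using None relevant_times_input
    by (auto simp: net_out_def relevant_stamps_def stamp0_def split: option.splits)
next
  case (Some n)
  have n: "n \<in> nodes N" by (rule wf_mimos_writer[OF wf c Some])
  have "fst t \<in> relevant_times N inp" if h: "concat_str (node_events N n H c) i = Some (v, t)" for i v t
  proof -
    obtain k l where "node_events N n H c k = Some (l, t)" using concat_str_SomeD[OF h] by blast
    then show ?thesis by (rule relevant_times_node[OF n node_events_stamp(2)[OF wf n]])
  qed
  then show ?thesis using Some by (simp add: net_out_def node_out_eq relevant_stamps_def)
qed

section \<open>Well-founded time\<close>

lemma finite_range_below:
  fixes f :: "nat \<Rightarrow> 'a::linorder"
  assumes "mono f" "\<forall>B. \<exists>k. B < f k"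
  shows "finite {x \<in> range f. x \<le> T}"
proof -
  obtain k where k: "T < f k" using assms(2) by blast
  have "{x \<in> range f. x \<le> T} \<subseteq> f ` {..<k}"
  proof
    fix x assume "x \<in> {x \<in> range f. x \<le> T}"
    then obtain j where j: "x = f j" "f j \<le> T" by blast
    have "j < k"
    proof (rule ccontr)
      assume "\<not> j < k" then have "f k \<le> f j" using assms(1) by (simp add: monoD)
      then show False using j k by simp
    qed
    then show "x \<in> f ` {..<k}" using j by blast
  qed
  then show ?thesis by (rule finite_subset) simp
qed

lemma tstream_finite_stamps_below:
  assumes "tstream s"
  shows "finite {t. \<exists>i v. s i = Some (v, t) \<and> t \<le> T}"
proof -
  have mo: "\<And>i j v w t u. i \<le> j \<Longrightarrow> s i = Some (v, t) \<Longrightarrow> s j = Some (w, u) \<Longrightarrow> t \<le> u"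
    using assms by (simp add: tstream_def)
  define g where "g = (\<lambda>i. snd (the (s i)))"
  obtain K where K: "\<And>i v t. s i = Some (v, t) \<Longrightarrow> t \<le> T \<Longrightarrow> i < K"
  proof (cases "\<forall>i. s i \<noteq> None")
    case True
    then obtain i1 v1 t1 where i1: "s i1 = Some (v1, t1)" "T < t1" using assms unfolding tstream_def by blast
    show ?thesis
    proof (rule that[of i1])
      fix i v t assume "s i = Some (v, t)" "t \<le> T"
      then show "i < i1" using mo[of i1 i v1 t1 v t] i1 by (cases "i1 \<le> i") auto
    qed
  next
    case False
    then obtain i0 where i0: "s i0 = None" by blast
    show ?thesis
    proof (rule that[of i0])
      fix i v t assume "s i = Some (v, t)" "t \<le> T"
      then show "i < i0" using tstream_None_mono[OF assms, of i0 i] i0 by (cases "i0 \<le> i") auto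
    qed
  qed
  have "{t. \<exists>i v. s i = Some (v, t) \<and> t \<le> T} \<subseteq> g ` {..<K}"
  proof
    fix t assume "t \<in> {t. \<exists>i v. s i = Some (v, t) \<and> t \<le> T}"
    then obtain i v where iv: "s i = Some (v, t)" "t \<le> T" by blast
    then have "i < K" using K by blast
    moreover have "t = g i" using iv by (simp add: g_def)
    ultimately show "t \<in> g ` {..<K}" by blast
  qed
  then show ?thesis by (rule finite_subset) simp
qed

lemma relevant_times_finite_below:
  assumes wf: "wf_mimos N" and ins: "\<forall>c \<in> in_chans N. tstream (inp c)"
  shows "finite {x \<in> relevant_times N inp. x \<le> T}"
proof -
  have fn: "finite (nodes N)" and fc: "finite (chans N)" using wf by (auto simp: wf_mimos_def)
  have a: "\<And>n. n \<in> nodes N \<Longrightarrow> finite {x \<in> range (rel N n) \<union> range (\<lambda>j. rel N n j + dl N n). x \<le> T}"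
  proof -
    fix n assume n: "n \<in> nodes N"
    interpret timed_node N n by (rule wf_mimos_timed_node[OF wf n])
    have m2: "mono (\<lambda>j. rel N n j + dl N n)" using mono_rel by (simp add: mono_def)
    have d2: "\<forall>B. \<exists>k. B < rel N n k + dl N n"
    proof
      fix B obtain k where "B - dl N n < rel N n k" using div_rel by blast
      then show "\<exists>k. B < rel N n k + dl N n" by (intro exI[of _ k]) simp
    qed
    have "{x \<in> range (rel N n) \<union> range (\<lambda>j. rel N n j + dl N n). x \<le> T}
        = {x \<in> range (rel N n). x \<le> T} \<union> {x \<in> range (\<lambda>j. rel N n j + dl N n). x \<le> T}" by blast
    then show "?thesis n" using finite_range_below[OF mono_rel div_rel] finite_range_below[OF m2 d2] by simp
  qed
  have b: "\<And>c. c \<in> in_chans N \<Longrightarrow> finite {x \<in> {t. \<exists>i v. inp c i = Some (v, t)}. x \<le> T}"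
  proof -
    fix c assume "c \<in> in_chans N"
    then have "finite {t. \<exists>i v. inp c i = Some (v, t) \<and> t \<le> T}" using tstream_finite_stamps_below ins by blast
    moreover have "{x \<in> {t. \<exists>i v. inp c i = Some (v, t)}. x \<le> T} = {t. \<exists>i v. inp c i = Some (v, t) \<and> t \<le> T}" by blast
    ultimately show "?thesis c" by simp
  qed
  have fi: "finite (in_chans N)" using fc by (simp add: in_chans_def)
  have "{x \<in> relevant_times N inp. x \<le> T} =
     (\<Union>n\<in>nodes N. {x \<in> range (rel N n) \<union> range (\<lambda>j. rel N n j + dl N n). x \<le> T})
     \<union> (\<Union>c\<in>in_chans N. {x \<in> {t. \<exists>i v. inp c i = Some (v, t)}. x \<le> T})"
    unfolding relevant_times_def by blast
  then show ?thesis using a b fn fi by simp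
qed

lemma wf_less_locally_finite:
  fixes R :: "real set"
  assumes fin: "\<And>T. finite {x \<in> R. x \<le> T}"
  shows "wf {(a, b :: real \<times> nat). fst a \<in> R \<and> a < b}"
proof -
  define Rr where "Rr = {(a, b). a \<in> R \<and> (a::real) < b}"
  have "wf Rr"
  proof (rule wf_finite_segments)
    show "irrefl Rr" unfolding Rr_def irrefl_def by simp
    show "trans Rr" unfolding Rr_def trans_def by auto
    fix x
    have "{y. (y, x) \<in> Rr} \<subseteq> {y \<in> R. y \<le> x}" unfolding Rr_def by auto
    then show "finite {y. (y, x) \<in> Rr}" using fin by (rule finite_subset)
  qed
  then have "wf (Rr <*lex*> less_than)" by (rule wf_lex_prod) simp
  moreover have "{(a, b :: real \<times> nat). fst a \<in> R \<and> a < b} \<subseteq> Rr <*lex*> less_than"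
    unfolding Rr_def by (auto simp: less_prod_def')
  ultimately show ?thesis by (rule wf_subset)
qed

definition relevant_less :: "('n, 'c, 's, 'v) mimos \<Rightarrow> ('c \<Rightarrow> ('v, real) str) \<Rightarrow> (sdtime \<times> sdtime) set" where
  "relevant_less N inp = {(a, b). fst a \<in> relevant_times N inp \<and> a < b}"

lemma wf_relevant_less:
  assumes "wf_mimos N" "\<forall>c \<in> in_chans N. tstream (inp c)"
  shows "wf (relevant_less N inp)"
  unfolding relevant_less_def by (rule wf_less_locally_finite[OF relevant_times_finite_below[OF assms]])

section \<open>Gluing consistent streams\<close>

definition consistent_family :: "('t::linorder \<Rightarrow> ('v, 't) str) \<Rightarrow> 't set \<Rightarrow> bool" where
  "consistent_family S A \<longleftrightarrow> (\<forall>\<rho>1\<in>A. \<forall>\<rho>2\<in>A. agree_upto (min \<rho>1 \<rho>2) (S \<rho>1) (S \<rho>2))"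

text \<open>Position \<open>i\<close> of the glued stream is taken from any member \<open>S \<rho>\<close> holding there an item
  stamped at most \<open>\<rho>\<close>; consistency makes the choice irrelevant.\<close>

definition glue_str :: "('t::linorder \<Rightarrow> ('v, 't) str) \<Rightarrow> 't set \<Rightarrow> ('v, 't) str" where
  "glue_str S A i = (if \<exists>\<rho>. \<rho> \<in> A \<and> (\<exists>v t. S \<rho> i = Some (v, t) \<and> t \<le> \<rho>)
      then S (SOME \<rho>. \<rho> \<in> A \<and> (\<exists>v t. S \<rho> i = Some (v, t) \<and> t \<le> \<rho>)) i else None)"

lemma glue_str_SomeD:
  assumes "glue_str S A i = Some (v, t)"
  shows "\<exists>\<rho>\<in>A. S \<rho> i = Some (v, t) \<and> t \<le> \<rho>"
proof -
  let ?P = "\<lambda>\<rho>. \<rho> \<in> A \<and> (\<exists>v t. S \<rho> i = Some (v, t) \<and> t \<le> \<rho>)"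
  have ex: "\<exists>\<rho>. ?P \<rho>" using assms unfolding glue_str_def by (auto split: if_splits)
  then have "?P (SOME \<rho>. ?P \<rho>)" by (rule someI_ex)
  moreover have "glue_str S A i = S (SOME \<rho>. ?P \<rho>) i" using ex unfolding glue_str_def by simp
  ultimately show ?thesis using assms by auto
qed

lemma consistent_family_eq:
  assumes "consistent_family S A" "\<rho>1 \<in> A" "\<rho>2 \<in> A"
    and "S \<rho>1 i = Some (v1, t1)" "t1 \<le> \<rho>1" "S \<rho>2 i = Some (v2, t2)" "t2 \<le> \<rho>2"
  shows "S \<rho>1 i = S \<rho>2 i"
proof -
  have ag: "agree_upto (min \<rho>1 \<rho>2) (S \<rho>1) (S \<rho>2)" using assms(1-3) unfolding consistent_family_def by blast
  show ?thesis
  proof (cases "t1 \<le> \<rho>2")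
    case True
    then show ?thesis using agree_uptoD[OF ag _ assms(4)] assms(4,5) by simp
  next
    case False
    then have "t2 \<le> min \<rho>1 \<rho>2" using assms(5,7) by simp
    then show ?thesis using agree_uptoD'[OF ag _ assms(6)] assms(6) by simp
  qed
qed

lemma glue_str_agree:
  assumes cons: "consistent_family S A" and r: "\<rho> \<in> A"
  shows "agree_upto \<rho> (glue_str S A) (S \<rho>)"
  unfolding agree_upto_def
proof (intro allI impI iffI)
  fix i v t assume t: "t \<le> \<rho>"
  { assume g: "glue_str S A i = Some (v, t)"
    obtain \<rho>' where r': "\<rho>' \<in> A" "S \<rho>' i = Some (v, t)" "t \<le> \<rho>'"
      using glue_str_SomeD[OF g] by blast
    have ag: "agree_upto (min \<rho> \<rho>') (S \<rho>) (S \<rho>')" using cons r r'(1) unfolding consistent_family_def by blast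
    have "t \<le> min \<rho> \<rho>'" using t r'(3) by simp
    then show "S \<rho> i = Some (v, t)" by (rule agree_uptoD'[OF ag _ r'(2)]) }
  { assume h: "S \<rho> i = Some (v, t)"
    let ?P = "\<lambda>\<rho>. \<rho> \<in> A \<and> (\<exists>v t. S \<rho> i = Some (v, t) \<and> t \<le> \<rho>)"
    have ex: "\<exists>\<rho>. ?P \<rho>" using r t h by blast
    then obtain v' t' where r': "(SOME \<rho>. ?P \<rho>) \<in> A"
      and vt': "S (SOME \<rho>. ?P \<rho>) i = Some (v', t')" "t' \<le> (SOME \<rho>. ?P \<rho>)"
      using someI_ex[OF ex] by blast
    have "glue_str S A i = S (SOME \<rho>. ?P \<rho>) i" using ex unfolding glue_str_def by simp
    then show "glue_str S A i = Some (v, t)" using consistent_family_eq[OF cons r r' h t vt'] h by simp }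
qed

lemma glue_str_ordered:
  assumes cons: "consistent_family S A" and ord: "\<forall>\<rho>\<in>A. ordered_str (S \<rho>)"
  shows "ordered_str (glue_str S A)"
proof -
  have down: "\<exists>v t. glue_str S A i = Some (v, t) \<and> t \<le> u"
    if ij: "i \<le> j" and h: "glue_str S A j = Some (w, u)" for i j w u
  proof -
    obtain \<rho> where r: "\<rho> \<in> A" "S \<rho> j = Some (w, u)" "u \<le> \<rho>" using glue_str_SomeD[OF h] by blast
    obtain v t where vt: "S \<rho> i = Some (v, t)" "t \<le> u"
      using ordered_str_down[of "S \<rho>", OF _ r(2) ij] ord r(1) by blast
    have "t \<le> \<rho>" using vt(2) r(3) by (rule order_trans)
    then have "glue_str S A i = Some (v, t)" by (rule agree_uptoD'[OF glue_str_agree[OF cons r(1)] _ vt(1)])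
    then show ?thesis using vt(2) by blast
  qed
  show ?thesis unfolding ordered_str_def
  proof (intro conjI allI impI)
    fix i j assume "i \<le> j" "glue_str S A j \<noteq> None"
    then obtain w u where "glue_str S A j = Some (w, u)" by (cases "glue_str S A j") auto
    then show "glue_str S A i \<noteq> None" using down \<open>i \<le> j\<close> by blast
  next
    fix i j v w t u assume a: "i \<le> j" "glue_str S A i = Some (v, t)" "glue_str S A j = Some (w, u)"
    then show "t \<le> u" using down[OF a(1,3)] by auto
  qed
qed

section \<open>Partial runs\<close>

definition run_upto :: "('n, 'c, 's, 'v) mimos \<Rightarrow> ('c \<Rightarrow> ('v, real) str) \<Rightarrow> sdtime \<Rightarrow> ('c, 'v) hist \<Rightarrow> bool" where
  "run_upto N inp \<sigma> H \<longleftrightarrow>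
     (\<forall>c\<in>chans N. ordered_str (H c) \<and> relevant_stamps N inp (H c) \<and> agree_upto \<sigma> (H c) (net_out N inp H c))"

lemma run_upto_mono: "run_upto N inp \<sigma> H \<Longrightarrow> \<rho> \<le> \<sigma> \<Longrightarrow> run_upto N inp \<rho> H"
  unfolding run_upto_def using agree_upto_mono by blast

lemma relevant_agree_before:
  assumes "relevant_stamps N inp s" "relevant_stamps N inp s'"
    and "\<And>t. fst t \<in> relevant_times N inp \<Longrightarrow> t < \<rho> \<Longrightarrow> agree_upto t s s'"
  shows "agree_before \<rho> s s'"
  by (rule agree_before_from[where P = "\<lambda>t. fst t \<in> relevant_times N inp"])
    (use assms in \<open>auto intro: relevant_stampsD\<close>)

text \<open>Uniqueness goes by well-founded induction on \<open>\<rho>\<close>: if two partial runs agree on all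
  relevant stamps before \<open>\<rho>\<close>, then by causality the network produces the same items up
  to \<open>\<rho>\<close> from both.\<close>

lemma run_upto_unique:
  fixes H H' :: "('c, 'v) hist" and N :: "('n, 'c, 's, 'v) mimos"
  assumes wf: "wf_mimos N" and ins: "\<forall>c \<in> in_chans N. tstream (inp c)"
    and run: "run_upto N inp \<sigma> H" and run': "run_upto N inp \<sigma> H'"
  shows "\<forall>c\<in>chans N. agree_upto \<sigma> (H c) (H' c)"
proof -
  have "\<rho> \<le> \<sigma> \<longrightarrow> (\<forall>c\<in>chans N. agree_upto \<rho> (H c) (H' c))" for \<rho>
    using wf_relevant_less[OF wf ins]
  proof (induction \<rho> rule: wf_induct_rule)
    case (less \<rho>)
    show ?case
    proof (intro impI ballI)
      assume \<rho>\<sigma>: "\<rho> \<le> \<sigma>"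
      fix c assume c: "c \<in> chans N"
      have "ordered_str (H c) \<and> ordered_str (H' c) \<and> agree_before \<rho> (H c) (H' c)"
        if c: "c \<in> chans N" for c
      proof -
        have "agree_upto t (H c) (H' c)" if "fst t \<in> relevant_times N inp" "t < \<rho>" for t
          using less[of t] that \<rho>\<sigma> c by (simp add: relevant_less_def)
        then show ?thesis using run run' c relevant_agree_before unfolding run_upto_def by blast
      qed
      then have "agree_upto \<rho> (net_out N inp H c) (net_out N inp H' c)" by (intro net_out_cong[OF wf c]) blast
      moreover have "agree_upto \<rho> (H c) (net_out N inp H c)" "agree_upto \<rho> (H' c) (net_out N inp H' c)"
        using run run' c \<rho>\<sigma> agree_upto_mono unfolding run_upto_def by blast+
      ultimately show "agree_upto \<rho> (H c) (H' c)"
        by (meson agree_upto_sym agree_upto_trans)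
    qed
  qed
  then show ?thesis by blast
qed

lemma run_upto_consistent:
  fixes G :: "sdtime \<Rightarrow> ('c, 'v) hist"
  assumes wf: "wf_mimos N" and ins: "\<forall>c \<in> in_chans N. tstream (inp c)"
    and runs: "\<forall>\<rho>\<in>A. run_upto N inp \<rho> (G \<rho>)" and c: "c \<in> chans N"
  shows "consistent_family (\<lambda>\<rho>. G \<rho> c) A"
  unfolding consistent_family_def
proof (intro ballI)
  fix \<rho>1 \<rho>2 assume "\<rho>1 \<in> A" "\<rho>2 \<in> A"
  then have "run_upto N inp (min \<rho>1 \<rho>2) (G \<rho>1)" "run_upto N inp (min \<rho>1 \<rho>2) (G \<rho>2)"
    using runs run_upto_mono[OF _ min.cobounded1] run_upto_mono[OF _ min.cobounded2] by blast+
  from run_upto_unique[OF wf ins this] show "agree_upto (min \<rho>1 \<rho>2) (G \<rho>1 c) (G \<rho>2 c)"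
    using c by blast
qed

definition glue_hist :: "(sdtime \<Rightarrow> ('c, 'v) hist) \<Rightarrow> sdtime set \<Rightarrow> ('c, 'v) hist" where
  "glue_hist G A c = glue_str (\<lambda>\<rho>. G \<rho> c) A"

lemma glue_hist_props:
  fixes G :: "sdtime \<Rightarrow> ('c, 'v) hist"
  assumes wf: "wf_mimos N" and ins: "\<forall>c \<in> in_chans N. tstream (inp c)"
    and runs: "\<forall>\<rho>\<in>A. run_upto N inp \<rho> (G \<rho>)" and c: "c \<in> chans N"
  shows "ordered_str (glue_hist G A c)"
    and "relevant_stamps N inp (glue_hist G A c)"
    and "\<rho> \<in> A \<Longrightarrow> agree_upto \<rho> (glue_hist G A c) (G \<rho> c)"
proof -
  note cons = run_upto_consistent[OF wf ins runs c]
  show "ordered_str (glue_hist G A c)"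
    unfolding glue_hist_def using runs c by (intro glue_str_ordered[OF cons]) (simp add: run_upto_def)
  show "\<rho> \<in> A \<Longrightarrow> agree_upto \<rho> (glue_hist G A c) (G \<rho> c)"
    unfolding glue_hist_def by (rule glue_str_agree[OF cons])
  show "relevant_stamps N inp (glue_hist G A c)"
    unfolding relevant_stamps_def
  proof (intro allI impI)
    fix i v t assume "glue_hist G A c i = Some (v, t)"
    then obtain \<rho> where r: "\<rho> \<in> A" "G \<rho> c i = Some (v, t)"
      using glue_str_SomeD[of "\<lambda>\<rho>. G \<rho> c"] unfolding glue_hist_def by blast
    have "relevant_stamps N inp (G \<rho> c)" using runs r(1) c unfolding run_upto_def by blast
    then show "fst t \<in> relevant_times N inp" using r(2) by (rule relevant_stampsD)
  qed
qed

lemma glue_agree_net_out: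
  fixes G :: "sdtime \<Rightarrow> ('c, 'v) hist"
  assumes wf: "wf_mimos N" and ins: "\<forall>c \<in> in_chans N. tstream (inp c)"
    and runs: "\<forall>\<rho>\<in>A. run_upto N inp \<rho> (G \<rho>)" and r: "\<rho> \<in> A" and c: "c \<in> chans N"
  shows "agree_upto \<rho> (glue_hist G A c) (net_out N inp (glue_hist G A) c)"
proof -
  note glue = glue_hist_props[OF wf ins runs]
  have "\<forall>c\<in>chans N. ordered_str (G \<rho> c) \<and> ordered_str (glue_hist G A c)
                   \<and> agree_before \<rho> (G \<rho> c) (glue_hist G A c)"
    using runs r glue(1) agree_upto_before[OF agree_upto_sym[OF glue(3)[OF _ r]]]
    unfolding run_upto_def by blast
  then have "agree_upto \<rho> (net_out N inp (G \<rho>) c) (net_out N inp (glue_hist G A) c)"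
    by (rule net_out_cong[OF wf c])
  moreover have "agree_upto \<rho> (G \<rho> c) (net_out N inp (G \<rho>) c)" using runs r c unfolding run_upto_def by blast
  ultimately show ?thesis using glue(3)[OF c r] by (meson agree_upto_trans)
qed

text \<open>Existence goes by well-founded recursion: glue the partial runs up to all smaller relevant
  stamps and apply the network once more; causality turns agreement before \<open>\<sigma>\<close> into agreement
  up to \<open>\<sigma>\<close>.\<close>

lemma run_upto_step:
  fixes G :: "sdtime \<Rightarrow> ('c, 'v) hist" and N :: "('n, 'c, 's, 'v) mimos"
    and inp :: "'c \<Rightarrow> ('v, real) str" and \<sigma> :: sdtime
  defines "A \<equiv> {\<rho>. (\<rho>, \<sigma>) \<in> relevant_less N inp}"
  assumes wf: "wf_mimos N" and ins: "\<forall>c \<in> in_chans N. tstream (inp c)"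
    and runs: "\<forall>\<rho>\<in>A. run_upto N inp \<rho> (G \<rho>)"
  shows "run_upto N inp \<sigma> (net_out N inp (glue_hist G A))"
proof -
  define H where "H = glue_hist G A"
  note glue = glue_hist_props[OF wf ins runs]
  have "ordered_str (H c) \<and> ordered_str (net_out N inp H c) \<and> agree_before \<sigma> (H c) (net_out N inp H c)"
    if c: "c \<in> chans N" for c
  proof -
    have "agree_upto t (H c) (net_out N inp H c)" if "fst t \<in> relevant_times N inp" "t < \<sigma>" for t
      using glue_agree_net_out[OF wf ins runs _ c] that unfolding H_def A_def relevant_less_def by simp
    then show ?thesis
      using glue(1,2)[OF c] net_out_ordered[OF wf ins c] net_out_relevant[OF wf c] relevant_agree_before
      unfolding H_def by blast
  qed
  then have "agree_upto \<sigma> (net_out N inp H c) (net_out N inp (net_out N inp H) c)" if "c \<in> chans N" for c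
    using net_out_cong[OF wf that] by blast
  then show ?thesis unfolding run_upto_def H_def
    using net_out_ordered[OF wf ins] net_out_relevant[OF wf] by blast
qed

lemma run_upto_exists:
  fixes N :: "('n, 'c, 's, 'v) mimos"
  assumes wf: "wf_mimos N" and ins: "\<forall>c \<in> in_chans N. tstream (inp c)"
  shows "\<exists>H :: ('c, 'v) hist. run_upto N inp \<sigma> H"
  using wf_relevant_less[OF wf ins]
proof (induction \<sigma> rule: wf_induct_rule)
  case (less \<sigma>)
  define G :: "sdtime \<Rightarrow> ('c, 'v) hist" where "G = (\<lambda>\<rho>. SOME H. run_upto N inp \<rho> H)"
  have "\<forall>\<rho>\<in>{\<rho>. (\<rho>, \<sigma>) \<in> relevant_less N inp}. run_upto N inp \<rho> (G \<rho>)"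
    unfolding G_def using someI_ex[OF less] by simp
  then show ?case using run_upto_step[OF wf ins] by blast
qed

theorem run_exists:
  fixes N :: "('n, 'c, 's, 'v) mimos"
  assumes wf: "wf_mimos N" and ins: "\<forall>c \<in> in_chans N. tstream (inp c)"
  shows "\<exists>H. is_run N inp H"
proof -
  define G :: "sdtime \<Rightarrow> ('c, 'v) hist" where "G = (\<lambda>\<rho>. SOME H. run_upto N inp \<rho> H)"
  define A :: "sdtime set" where "A = {\<rho>. fst \<rho> \<in> relevant_times N inp}"
  have runs: "\<forall>\<rho>\<in>A. run_upto N inp \<rho> (G \<rho>)"
    unfolding G_def using someI_ex[OF run_upto_exists[OF wf ins]] by blast
  define H where "H = glue_hist G A"
  have "H c = net_out N inp H c" if c: "c \<in> chans N" for c
  proof (rule eq_from_agree[where P = "\<lambda>t. fst t \<in> relevant_times N inp"])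
    show "fst t \<in> relevant_times N inp" if "H c i = Some (v, t)" for i v t
      using relevant_stampsD[OF glue_hist_props(2)[OF wf ins runs c] that[unfolded H_def]] .
    show "fst t \<in> relevant_times N inp" if "net_out N inp H c i = Some (v, t)" for i v t
      using relevant_stampsD[OF net_out_relevant[OF wf c] that] .
    show "agree_upto t (H c) (net_out N inp H c)" if "fst t \<in> relevant_times N inp" for t
      using glue_agree_net_out[OF wf ins runs _ c] that unfolding H_def A_def by simp
  qed
  then show ?thesis unfolding is_run_iff_fixpoint by blast
qed

lemma run_is_run_upto:
  assumes wf: "wf_mimos N" and ins: "\<forall>c \<in> in_chans N. tstream (inp c)" and r: "is_run N inp H"
  shows "run_upto N inp \<sigma> H"
  using r net_out_ordered[OF wf ins] net_out_relevant[OF wf]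
  unfolding run_upto_def is_run_iff_fixpoint by (metis agree_upto_def)

theorem run_unique:
  assumes wf: "wf_mimos N" and ins: "\<forall>c \<in> in_chans N. tstream (inp c)"
    and r: "is_run N inp H" and r': "is_run N inp H'" and c: "c \<in> chans N"
  shows "H c = H' c"
proof (rule eq_from_agree[where P = "\<lambda>_. True"])
  show "agree_upto \<rho> (H c) (H' c)" for \<rho>
    using run_upto_unique[OF wf ins run_is_run_upto[OF wf ins r] run_is_run_upto[OF wf ins r']] c by blast
qed simp_all

lemma run_tstream:
  assumes wf: "wf_mimos N" and ins: "\<forall>c \<in> in_chans N. tstream (inp c)"
    and r: "is_run N inp H" and c: "c \<in> chans N"
  shows "tstream (strip (H c))"
proof (cases "writer N c")
  case None
  then have "H c = stamp0 (inp c)" "tstream (inp c)"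
    using r c ins by (simp_all add: is_run_def in_chans_def)
  then show ?thesis by (simp add: strip_stamp0)
next
  case (Some n)
  have n: "n \<in> nodes N" by (rule wf_mimos_writer[OF wf c Some])
  interpret timed_node N n by (rule wf_mimos_timed_node[OF wf n])
  have hc: "H c = concat_str (node_events N n H c)"
    using r c Some by (simp add: is_run_def node_out_eq)
  show ?thesis unfolding hc
  proof (rule tstream_strip)
    show "ordered_str (concat_str (node_events N n H c))"
      by (rule concat_str_ordered[OF node_events_mono[OF wf n]])
    show "\<forall>B. \<exists>i v t. concat_str (node_events N n H c) i = Some (v, t) \<and> B < fst t"
      if "\<forall>i. concat_str (node_events N n H c) i \<noteq> None"
      using concat_str_divergent[OF node_events_mono[OF wf n] mono_rel div_rel
          node_events_stamp(1)[OF wf n] that] .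
  qed
qed

theorem theorem2:
  fixes N :: "('n, 'c, 's, 'v) mimos" and inp :: "'c \<Rightarrow> ('v, real) str"
  assumes "wf_mimos N"
    and "\<forall>c \<in> in_chans N. tstream (inp c)"
  shows "(\<exists>H. is_run N inp H) \<and>
         (\<forall>H H'. is_run N inp H \<longrightarrow> is_run N inp H' \<longrightarrow>
                 (\<forall>c \<in> out_chans N. strip (H c) = strip (H' c))) \<and>
         (\<forall>H. is_run N inp H \<longrightarrow> (\<forall>c \<in> out_chans N. tstream (strip (H c))))"
proof (intro conjI allI impI ballI)
  show "\<exists>H. is_run N inp H" by (rule run_exists[OF assms])
next
  fix H H' c assume r: "is_run N inp H" "is_run N inp H'" and c: "c \<in> out_chans N"
  have "c \<in> chans N" using c by (simp add: out_chans_def)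
  then have "H c = H' c" by (rule run_unique[OF assms r])
  then show "strip (H c) = strip (H' c)" by simp
next
  fix H c assume r: "is_run N inp H" and c: "c \<in> out_chans N"
  have "c \<in> chans N" using c by (simp add: out_chans_def)
  then show "tstream (strip (H c))" by (rule run_tstream[OF assms r])
qed

end
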